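(* Let $(M^n,c,v^m d\nu)$ be a smooth conformal measure space with characteristic constant $\mu$, $n\ge3$, $m\in\mathbb{R}\setminus\{-n,1-n,2-n\}$. Let $u\in\mathcal{E}[1]$ and $I=\frac{1}{m+n}\mathbb{D}^Wu$. In any scale $g\in c$, $$|I|^2=-\frac{(R^m_\phi+m\mu v^{-2})u^2+2(m+n-1)u\Delta_\phi u-(m+n)(m+n-1)|\nabla u|^2}{(m+n)(m+n-1)}.$$ In particular, for a constant $\lambda$, the smooth metric measure space $(M^n,u^{-2}g,(u^{-1}v)^m\mathrm{dvol}_{u^{-2}g})$ satisfies $\hat R^m_\phi+m\mu\hat v^{-2}=(m+n)\lambda$ (where $\hat v=u^{-1}v$ and $\hat R^m_\phi=R(\hat g)-2m\hat v^{-1}\hat\Delta\hat v-m(m-1)\hat v^{-2}|\hat\nabla\hat v|^2_{\hat g}$ with $\hat g=u^{-2}g$) if and only if $|I|^2=-\frac{\lambda}{m+n-1}$.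
   Context: $(M^n,c)$: manifold with a conformal class of Riemannian metrics, $n\ge3$. $\mathcal{E}[w]$: conformal densities of weight $w$ (functions in a scale $g\in c$, multiplied by $e^{ws}$ under $g\mapsto e^{2s}g$). Standard tractor bundle $\mathbb{T}\cong\mathbb{R}\oplus TM\oplus\mathbb{R}$ in a scale, tractor $I$ with top $\sigma$, middle $\omega$, bottom $\rho$; tractor metric $|I|^2=2\sigma\rho+|\omega|_g^2$. SCMS $(M^n,c,v^md\nu)$ with characteristic constant $\mu$: positive $v\in\mathcal{E}[1]$, $m\in\mathbb{R}$, constant $\mu$. In a scale, $v$ is a positive function, $\Delta=\operatorname{tr}_g\nabla^2$, $\Delta_\phi u=\Delta u+mv^{-1}g(\nabla v,\nabla u)$, $R^m_\phi=R-2mv^{-1}\Delta v-m(m-1)v^{-2}|\nabla v|^2$, $\mathrm{J}^W=\frac{1}{2(m+n-1)}(R^m_\phi+m\mu v^{-2})$. The $W$-tractor-$D$ operator $\mathbb{D}^W:\mathcal{E}[w]\to\mathcal{T}[w-1]$ is given in a scale by: top $w(m+n+2w-2)u$, middle $(m+n+2w-2)\nabla u$, bottom $-(\Delta_\phi u+w\mathrm{J}^Wu)$. *)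

theory Defs
  imports "HOL-Analysis.Analysis"
begin

text \<open>Local (coordinate) rendering of the conformal / smooth metric measure space
  geometry: the manifold is replaced by an open set U of R^n (a chart), a metric
  in the conformal class is a smooth field of symmetric positive definite matrices,
  and all curvature quantities are defined through coordinate formulas.\<close>

type_synonym 'n metric = "real^'n \<Rightarrow> real^'n^'n"

definition pd :: "'n::finite \<Rightarrow> (real^'n \<Rightarrow> real) \<Rightarrow> real^'n \<Rightarrow> real" where
  "pd i f x = deriv (\<lambda>t. f (x + t *\<^sub>R axis i 1)) 0"

primrec Ck :: "nat \<Rightarrow> (real^'n::finite) set \<Rightarrow> (real^'n \<Rightarrow> real) \<Rightarrow> bool" where
  "Ck 0 U f = continuous_on U f"
| "Ck (Suc k) U f = (continuous_on U f \<and>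
      (\<forall>i. \<forall>x\<in>U. (\<lambda>t. f (x + t *\<^sub>R axis i 1)) differentiable (at 0)) \<and>
      (\<forall>i. Ck k U (pd i f)))"

definition smooth_fun :: "(real^'n::finite) set \<Rightarrow> (real^'n \<Rightarrow> real) \<Rightarrow> bool" where
  "smooth_fun U f = (\<forall>k. Ck k U f)"

definition riem_metric :: "(real^'n::finite) set \<Rightarrow> 'n metric \<Rightarrow> bool" where
  "riem_metric U g = ((\<forall>i j. smooth_fun U (\<lambda>x. g x $ i $ j)) \<and>
      (\<forall>x\<in>U. transpose (g x) = g x \<and> (\<forall>\<xi>. \<xi> \<noteq> 0 \<longrightarrow> \<xi> \<bullet> (g x *v \<xi>) > 0)))"

definition ginv :: "'n::finite metric \<Rightarrow> real^'n \<Rightarrow> real^'n^'n" where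
  "ginv g x = matrix_inv (g x)"

definition chr :: "'n::finite metric \<Rightarrow> 'n \<Rightarrow> 'n \<Rightarrow> 'n \<Rightarrow> real^'n \<Rightarrow> real" where
  "chr g k i j x = (1/2) * (\<Sum>l\<in>UNIV. ginv g x $ k $ l *
      (pd i (\<lambda>y. g y $ j $ l) x + pd j (\<lambda>y. g y $ i $ l) x - pd l (\<lambda>y. g y $ i $ j) x))"

definition ric :: "'n::finite metric \<Rightarrow> 'n \<Rightarrow> 'n \<Rightarrow> real^'n \<Rightarrow> real" where
  "ric g i j x = (\<Sum>k\<in>UNIV. pd k (chr g k i j) x - pd j (chr g k i k) x
      + (\<Sum>l\<in>UNIV. chr g k k l x * chr g l i j x - chr g k j l x * chr g l i k x))"

definition scal :: "'n::finite metric \<Rightarrow> real^'n \<Rightarrow> real" where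
  "scal g x = (\<Sum>i\<in>UNIV. \<Sum>j\<in>UNIV. ginv g x $ i $ j * ric g i j x)"

definition coinner :: "'n::finite metric \<Rightarrow> real^'n \<Rightarrow> real^'n \<Rightarrow> real^'n \<Rightarrow> real" where
  "coinner g x a b = (\<Sum>i\<in>UNIV. \<Sum>j\<in>UNIV. ginv g x $ i $ j * a $ i * b $ j)"

definition grad :: "(real^'n::finite \<Rightarrow> real) \<Rightarrow> real^'n \<Rightarrow> real^'n" where
  "grad f x = (\<chi> i. pd i f x)"

definition lap :: "'n::finite metric \<Rightarrow> (real^'n \<Rightarrow> real) \<Rightarrow> real^'n \<Rightarrow> real" where
  "lap g f x = (\<Sum>i\<in>UNIV. \<Sum>j\<in>UNIV. ginv g x $ i $ j *
      (pd i (pd j f) x - (\<Sum>k\<in>UNIV. chr g k i j x * pd k f x)))"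

definition lap_phi :: "'n::finite metric \<Rightarrow> real \<Rightarrow> (real^'n \<Rightarrow> real) \<Rightarrow> (real^'n \<Rightarrow> real) \<Rightarrow> real^'n \<Rightarrow> real" where
  "lap_phi g m v f x = lap g f x + m / v x * coinner g x (grad v x) (grad f x)"

definition Rmphi :: "'n::finite metric \<Rightarrow> real \<Rightarrow> (real^'n \<Rightarrow> real) \<Rightarrow> real^'n \<Rightarrow> real" where
  "Rmphi g m v x = scal g x - 2 * m / v x * lap g v x
      - m * (m - 1) / (v x)^2 * coinner g x (grad v x) (grad v x)"

definition JW :: "'n::finite metric \<Rightarrow> real \<Rightarrow> real \<Rightarrow> (real^'n \<Rightarrow> real) \<Rightarrow> real^'n \<Rightarrow> real" where
  "JW g m \<mu> v x = (Rmphi g m v x + m * \<mu> / (v x)^2) / (2 * (m + real CARD('n) - 1))"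

text \<open>Tractors in a scale: (top, middle, bottom).\<close>
type_synonym 'n tractor = "real \<times> (real^'n) \<times> real"

definition DW :: "'n::finite metric \<Rightarrow> real \<Rightarrow> real \<Rightarrow> (real^'n \<Rightarrow> real) \<Rightarrow> real
     \<Rightarrow> (real^'n \<Rightarrow> real) \<Rightarrow> real^'n \<Rightarrow> 'n tractor" where
  "DW g m \<mu> v w f x =
     (let N = m + real CARD('n) + 2 * w - 2 in
      (w * N * f x, N *\<^sub>R grad f x, - (lap_phi g m v f x + w * JW g m \<mu> v x * f x)))"

definition tractor_scale :: "real \<Rightarrow> 'n::finite tractor \<Rightarrow> 'n tractor" where
  "tractor_scale r I = (case I of (\<sigma>, \<omega>, \<rho>) \<Rightarrow> (r * \<sigma>, r *\<^sub>R \<omega>, r * \<rho>))"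

definition tractor_sqnorm :: "'n::finite metric \<Rightarrow> real^'n \<Rightarrow> 'n tractor \<Rightarrow> real" where
  "tractor_sqnorm g x I = (case I of (\<sigma>, \<omega>, \<rho>) \<Rightarrow> 2 * \<sigma> * \<rho> + coinner g x \<omega> \<omega>)"

definition conf_metric :: "(real^'n::finite \<Rightarrow> real) \<Rightarrow> 'n metric \<Rightarrow> 'n metric" where
  "conf_metric u g = (\<lambda>x. (1 / (u x)^2) *\<^sub>R g x)"

end

theory Submission
  imports Defs "HOL-Analysis.Analysis"
begin

text \<open>Expanding \<open>|I|\<^sup>2 = 2\<sigma>\<rho> + |\<omega>|\<^sup>2\<close> for \<open>I = (m + n)\<^sup>-\<^sup>1 \<bbbD>\<^sup>W u\<close> gives the first formula at once.
  For the second, compute in coordinates: under \<open>g \<mapsto> u\<^sup>-\<^sup>2 g\<close> the Christoffel symbols change by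
  \<open>T\<^sup>k\<^sub>i\<^sub>j = g\<^sub>i\<^sub>j w\<^sup>k - \<delta>\<^sup>k\<^sub>j w\<^sub>i - \<delta>\<^sup>k\<^sub>i w\<^sub>j\<close> with \<open>w = d log u\<close>, which gives the classical laws
  \<open>R\<^sup>^ = u\<^sup>2 R + 2(n-1) u \<Delta>u - n(n-1) |\<nabla>u|\<^sup>2\<close> and \<open>\<Delta>\<^sup>^ f = u\<^sup>2 \<Delta>f - (n-2) u \<langle>\<nabla>u, \<nabla>f\<rangle>\<close>.
  Together with the quotient rule for \<open>v / u\<close> they yield
  \<open>R\<^sup>^\<^sup>m\<^sub>\<phi> + m\<mu> v\<^sup>^\<^sup>-\<^sup>2 = u\<^sup>2 (R\<^sup>m\<^sub>\<phi> + m\<mu> v\<^sup>-\<^sup>2) + 2(m+n-1) u \<Delta>\<^sub>\<phi> u - (m+n)(m+n-1) |\<nabla>u|\<^sup>2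
    = -(m+n)(m+n-1) |I|\<^sup>2\<close>,
  so the weighted scalar curvature equals \<open>(m + n) \<lambda>\<close> exactly where \<open>|I|\<^sup>2 = -\<lambda> / (m + n - 1)\<close>.\<close>

section \<open>Partial derivatives along coordinate lines\<close>

definition partial_differentiable :: "'n::finite \<Rightarrow> (real^'n \<Rightarrow> real) \<Rightarrow> real^'n \<Rightarrow> bool" where
  "partial_differentiable i f x = ((\<lambda>t. f (x + t *\<^sub>R axis i 1)) differentiable (at 0))"

lemma pd_has_real_derivative:
  "partial_differentiable i f x \<Longrightarrow> ((\<lambda>t. f (x + t *\<^sub>R axis i 1)) has_real_derivative pd i f x) (at 0)"
  unfolding partial_differentiable_def pd_def using DERIV_deriv_iff_real_differentiable by blast

lemma pd_eq_derivative:
  assumes "((\<lambda>t. f (x + t *\<^sub>R axis i 1)) has_real_derivative D) (at 0)"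
  shows "pd i f x = D" and "partial_differentiable i f x"
  using assms unfolding pd_def partial_differentiable_def
  by (auto simp: DERIV_imp_deriv real_differentiable_def)

lemma pd_const: "pd i (\<lambda>y. c) x = 0" and partial_differentiable_const: "partial_differentiable i (\<lambda>y. c) x"
  using pd_eq_derivative[where f = "\<lambda>y. c", OF DERIV_const] by auto

context
  fixes i and f h :: "real^'n::finite \<Rightarrow> real" and x
  assumes f: "partial_differentiable i f x" and h: "partial_differentiable i h x"
begin

lemma pd_add: "pd i (\<lambda>y. f y + h y) x = pd i f x + pd i h x"
  and partial_differentiable_add: "partial_differentiable i (\<lambda>y. f y + h y) x"
  using pd_eq_derivative[where f = "\<lambda>y. f y + h y",
      OF DERIV_add[OF pd_has_real_derivative[OF f] pd_has_real_derivative[OF h]]] by auto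

lemma pd_diff: "pd i (\<lambda>y. f y - h y) x = pd i f x - pd i h x"
  and partial_differentiable_diff: "partial_differentiable i (\<lambda>y. f y - h y) x"
  using pd_eq_derivative[where f = "\<lambda>y. f y - h y",
      OF DERIV_diff[OF pd_has_real_derivative[OF f] pd_has_real_derivative[OF h]]] by auto

lemma pd_mult: "pd i (\<lambda>y. f y * h y) x = pd i f x * h x + f x * pd i h x"
  and partial_differentiable_mult: "partial_differentiable i (\<lambda>y. f y * h y) x"
  using pd_eq_derivative[where f = "\<lambda>y. f y * h y",
      OF DERIV_mult[OF pd_has_real_derivative[OF f] pd_has_real_derivative[OF h]]]
  by (auto simp: mult.commute)

lemma pd_divide:
  assumes "h x \<noteq> 0"
  shows "pd i (\<lambda>y. f y / h y) x = pd i f x / h x - f x * pd i h x / (h x)\<^sup>2"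
    and partial_differentiable_divide: "partial_differentiable i (\<lambda>y. f y / h y) x"
proof -
  have "((\<lambda>t. f (x + t *\<^sub>R axis i 1) / h (x + t *\<^sub>R axis i 1)) has_real_derivative
      pd i f x / h x - f x * pd i h x / (h x)\<^sup>2) (at 0)"
    using DERIV_divide[OF pd_has_real_derivative[OF f] pd_has_real_derivative[OF h]] assms
    by (simp add: field_simps power2_eq_square)
  then show "pd i (\<lambda>y. f y / h y) x = pd i f x / h x - f x * pd i h x / (h x)\<^sup>2"
    and "partial_differentiable i (\<lambda>y. f y / h y) x"
    using pd_eq_derivative[where f = "\<lambda>y. f y / h y"] by auto
qed

end

lemma pd_inverse:
  assumes "partial_differentiable i f x" "f x \<noteq> 0"
  shows "pd i (\<lambda>y. inverse (f y)) x = - (pd i f x * inverse (f x ^ 2))"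
    and partial_differentiable_inverse: "partial_differentiable i (\<lambda>y. inverse (f y)) x"
proof -
  have "((\<lambda>t. inverse (f (x + t *\<^sub>R axis i 1))) has_real_derivative - (pd i f x * inverse (f x ^ 2))) (at 0)"
    using DERIV_inverse_fun[OF pd_has_real_derivative[OF assms(1)]] assms(2) by (simp add: power2_eq_square)
  then show "pd i (\<lambda>y. inverse (f y)) x = - (pd i f x * inverse (f x ^ 2))"
    and "partial_differentiable i (\<lambda>y. inverse (f y)) x"
    using pd_eq_derivative[where f = "\<lambda>y. inverse (f y)"] by auto
qed

lemma pd_minus: "partial_differentiable i f x \<Longrightarrow> pd i (\<lambda>y. - f y) x = - pd i f x"
  using pd_diff[OF partial_differentiable_const[of i 0 x]] by (simp add: pd_const)

lemma pd_if_const: "pd i (\<lambda>y. if P then f y else h y) x = (if P then pd i f x else pd i h x)"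
  by (cases P) simp_all

lemma partial_differentiable_if_const:
  "partial_differentiable i f x \<Longrightarrow> partial_differentiable i h x \<Longrightarrow>
    partial_differentiable i (\<lambda>y. if P then f y else h y) x"
  by (cases P) simp_all

lemma pd_sum:
  assumes "finite A" "\<And>a. a \<in> A \<Longrightarrow> partial_differentiable i (f a) x"
  shows "pd i (\<lambda>y. \<Sum>a\<in>A. f a y) x = (\<Sum>a\<in>A. pd i (f a) x)"
  using assms by (intro pd_eq_derivative(1) DERIV_sum) (auto intro: pd_has_real_derivative)

lemma pd_sum_mult:
  assumes "finite A" "\<And>a. a \<in> A \<Longrightarrow> partial_differentiable i (f a) x"
    "\<And>a. a \<in> A \<Longrightarrow> partial_differentiable i (h a) x"
  shows "pd i (\<lambda>y. \<Sum>a\<in>A. f a y * h a y) x = (\<Sum>a\<in>A. pd i (f a) x * h a x + f a x * pd i (h a) x)"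
  using assms by (simp add: pd_sum partial_differentiable_mult pd_mult)

lemma eventually_coordinate_line_in:
  fixes U :: "(real^'n::finite) set"
  assumes "open U" "x \<in> U"
  shows "eventually (\<lambda>t. x + t *\<^sub>R axis i 1 \<in> U) (nhds (0::real))"
proof -
  have "open ((\<lambda>t::real. x + t *\<^sub>R axis i 1) -` U)"
    by (rule continuous_open_vimage[OF assms(1)]) (intro continuous_intros)
  moreover have "(0::real) \<in> (\<lambda>t::real. x + t *\<^sub>R axis i 1) -` U" using assms by simp
  ultimately show ?thesis using eventually_nhds_in_open by fastforce
qed

lemma pd_cong_open:
  assumes "open U" "x \<in> U" "\<forall>y\<in>U. f y = h y"
  shows "pd i f x = pd i h x"
    and partial_differentiable_cong_open: "partial_differentiable i f x \<Longrightarrow> partial_differentiable i h x"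
proof -
  have ev: "eventually (\<lambda>t. f (x + t *\<^sub>R axis i 1) = h (x + t *\<^sub>R axis i 1)) (nhds (0::real))"
    using eventually_coordinate_line_in[OF assms(1,2), of i] assms(3) by (auto elim: eventually_mono)
  show "pd i f x = pd i h x" unfolding pd_def by (rule deriv_cong_ev[OF ev refl])
  assume "partial_differentiable i f x"
  then have "((\<lambda>t. h (x + t *\<^sub>R axis i 1)) has_real_derivative pd i f x) (at 0)"
    using pd_has_real_derivative DERIV_cong_ev[OF refl ev refl] by blast
  then show "partial_differentiable i h x" using pd_eq_derivative by blast
qed

section \<open>Smooth functions\<close>

lemma Ck_mono: "Ck (Suc k) U f \<Longrightarrow> Ck k U f"
  by (induction k arbitrary: f) auto

lemma Ck_continuous_on: "Ck k U f \<Longrightarrow> continuous_on U f"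
  by (cases k) auto

lemma Ck_partial_differentiable: "Ck (Suc k) U f \<Longrightarrow> x \<in> U \<Longrightarrow> partial_differentiable i f x"
  by (simp add: partial_differentiable_def)

lemma Ck_pd: "Ck (Suc k) U f \<Longrightarrow> Ck k U (pd i f)"
  by simp

lemma Ck_cong: "open U \<Longrightarrow> \<forall>y\<in>U. f y = h y \<Longrightarrow> Ck k U f \<Longrightarrow> Ck k U h"
proof (induction k arbitrary: f h)
  case 0
  then show ?case using continuous_on_cong by force
next
  case (Suc k)
  have "\<forall>y\<in>U. pd i f y = pd i h y" for i
    using pd_cong_open(1)[OF Suc.prems(1) _ Suc.prems(2)] by blast
  then show ?case
    using Suc.prems Suc.IH[of "pd i f" "pd i h" for i] continuous_on_cong[of U U f h]
      partial_differentiable_cong_open[OF Suc.prems(1) _ Suc.prems(2)]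
    by (auto simp: partial_differentiable_def)
qed

lemma Ck_SucI:
  assumes "open U" "continuous_on U f" "\<And>i x. x \<in> U \<Longrightarrow> partial_differentiable i f x"
    and "\<And>i x. x \<in> U \<Longrightarrow> pd i f x = D i x" "\<And>i. Ck k U (D i)"
  shows "Ck (Suc k) U f"
  using assms Ck_cong[OF assms(1), of "D i" "pd i f" k for i]
  by (auto simp: partial_differentiable_def)

lemma Ck_const: "Ck k U (\<lambda>y. c)"
proof (induction k arbitrary: c)
  case (Suc k)
  have e: "pd i (\<lambda>y. c) = (\<lambda>y. 0)" for i by (simp add: fun_eq_iff pd_const)
  have "Ck k U (pd i (\<lambda>y. c))" for i unfolding e by (rule Suc.IH)
  then show ?case
    using partial_differentiable_const by (simp add: partial_differentiable_def)
qed simp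

lemma Ck_add: "open U \<Longrightarrow> Ck k U f \<Longrightarrow> Ck k U h \<Longrightarrow> Ck k U (\<lambda>y. f y + h y)"
proof (induction k arbitrary: f h)
  case (Suc k)
  note df = Ck_partial_differentiable[OF Suc.prems(2)] and dh = Ck_partial_differentiable[OF Suc.prems(3)]
  show ?case
  proof (rule Ck_SucI[where D = "\<lambda>i y. pd i f y + pd i h y", OF Suc.prems(1)])
    show "continuous_on U (\<lambda>y. f y + h y)"
      using Suc.prems by (intro continuous_on_add Ck_continuous_on)
    show "partial_differentiable i (\<lambda>y. f y + h y) x" if "x \<in> U" for i x
      using partial_differentiable_add[OF df[OF that] dh[OF that]] .
    show "pd i (\<lambda>y. f y + h y) x = pd i f x + pd i h x" if "x \<in> U" for i x
      using pd_add[OF df[OF that] dh[OF that]] .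
    show "Ck k U (\<lambda>y. pd i f y + pd i h y)" for i
      using Suc.prems by (intro Suc.IH Ck_pd)
  qed
qed (auto intro: continuous_on_add)

lemma Ck_mult: "open U \<Longrightarrow> Ck k U f \<Longrightarrow> Ck k U h \<Longrightarrow> Ck k U (\<lambda>y. f y * h y)"
proof (induction k arbitrary: f h)
  case (Suc k)
  note df = Ck_partial_differentiable[OF Suc.prems(2)] and dh = Ck_partial_differentiable[OF Suc.prems(3)]
  show ?case
  proof (rule Ck_SucI[where D = "\<lambda>i y. pd i f y * h y + f y * pd i h y", OF Suc.prems(1)])
    show "continuous_on U (\<lambda>y. f y * h y)"
      using Suc.prems by (intro continuous_on_mult Ck_continuous_on)
    show "partial_differentiable i (\<lambda>y. f y * h y) x" if "x \<in> U" for i x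
      using partial_differentiable_mult[OF df[OF that] dh[OF that]] .
    show "pd i (\<lambda>y. f y * h y) x = pd i f x * h x + f x * pd i h x" if "x \<in> U" for i x
      using pd_mult[OF df[OF that] dh[OF that]] .
    show "Ck k U (\<lambda>y. pd i f y * h y + f y * pd i h y)" for i
      using Ck_add[OF Suc.prems(1) Suc.IH[OF Suc.prems(1) Ck_pd[OF Suc.prems(2)] Ck_mono[OF Suc.prems(3)]]
          Suc.IH[OF Suc.prems(1) Ck_mono[OF Suc.prems(2)] Ck_pd[OF Suc.prems(3)]]] .
  qed
qed (auto intro: continuous_on_mult)

lemma Ck_inverse: "open U \<Longrightarrow> \<forall>y\<in>U. f y \<noteq> 0 \<Longrightarrow> Ck k U f \<Longrightarrow> Ck k U (\<lambda>y. inverse (f y))"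
proof (induction k arbitrary: f)
  case (Suc k)
  note df = Ck_partial_differentiable[OF Suc.prems(3)]
  show ?case
  proof (rule Ck_SucI[where D = "\<lambda>i y. (- 1) * pd i f y * (inverse (f y) * inverse (f y))", OF Suc.prems(1)])
    show "continuous_on U (\<lambda>y. inverse (f y))"
      using continuous_on_inverse[OF Ck_continuous_on[OF Suc.prems(3)]] Suc.prems(2) by blast
    show "partial_differentiable i (\<lambda>y. inverse (f y)) x" if "x \<in> U" for i x
      using partial_differentiable_inverse[OF df[OF that]] Suc.prems(2) that by blast
    show "pd i (\<lambda>y. inverse (f y)) x = (- 1) * pd i f x * (inverse (f x) * inverse (f x))" if "x \<in> U" for i x
      using pd_inverse[OF df[OF that]] Suc.prems(2) that by (simp add: power2_eq_square)
    have "Ck k U (\<lambda>y. inverse (f y))"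
      using Suc.IH[OF Suc.prems(1,2) Ck_mono[OF Suc.prems(3)]] .
    then show "Ck k U (\<lambda>y. (- 1) * pd i f y * (inverse (f y) * inverse (f y)))" for i
      using Ck_mult[OF Suc.prems(1) Ck_mult[OF Suc.prems(1) Ck_const Ck_pd[OF Suc.prems(3)]]
          Ck_mult[OF Suc.prems(1)]] by blast
  qed
qed (auto intro: continuous_on_inverse)

lemma smooth_fun_cong: "open U \<Longrightarrow> \<forall>y\<in>U. f y = h y \<Longrightarrow> smooth_fun U f \<Longrightarrow> smooth_fun U h"
  unfolding smooth_fun_def using Ck_cong by blast

lemma smooth_fun_const: "smooth_fun U (\<lambda>y. c)"
  unfolding smooth_fun_def using Ck_const by blast

lemma smooth_fun_add: "open U \<Longrightarrow> smooth_fun U f \<Longrightarrow> smooth_fun U h \<Longrightarrow> smooth_fun U (\<lambda>y. f y + h y)"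
  unfolding smooth_fun_def using Ck_add by blast

lemma smooth_fun_mult: "open U \<Longrightarrow> smooth_fun U f \<Longrightarrow> smooth_fun U h \<Longrightarrow> smooth_fun U (\<lambda>y. f y * h y)"
  unfolding smooth_fun_def using Ck_mult by blast

lemma smooth_fun_inverse:
  "open U \<Longrightarrow> \<forall>y\<in>U. f y \<noteq> 0 \<Longrightarrow> smooth_fun U f \<Longrightarrow> smooth_fun U (\<lambda>y. inverse (f y))"
  unfolding smooth_fun_def using Ck_inverse by blast

lemma smooth_fun_pd: "smooth_fun U f \<Longrightarrow> smooth_fun U (pd i f)"
  unfolding smooth_fun_def using Ck_pd by blast

lemma smooth_fun_partial_differentiable: "smooth_fun U f \<Longrightarrow> x \<in> U \<Longrightarrow> partial_differentiable i f x"
  unfolding smooth_fun_def using Ck_partial_differentiable by blast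

lemma smooth_fun_minus: assumes "open U" "smooth_fun U f" shows "smooth_fun U (\<lambda>y. - f y)"
  using smooth_fun_mult[OF assms(1) smooth_fun_const assms(2), of "-1"] by simp

lemma smooth_fun_diff: "open U \<Longrightarrow> smooth_fun U f \<Longrightarrow> smooth_fun U h \<Longrightarrow> smooth_fun U (\<lambda>y. f y - h y)"
  using smooth_fun_add[of U f "\<lambda>y. - h y"] smooth_fun_minus[of U h] by simp

lemma smooth_fun_divide:
  "open U \<Longrightarrow> \<forall>y\<in>U. h y \<noteq> 0 \<Longrightarrow> smooth_fun U f \<Longrightarrow> smooth_fun U h \<Longrightarrow> smooth_fun U (\<lambda>y. f y / h y)"
  using smooth_fun_mult[of U f "\<lambda>y. inverse (h y)"] smooth_fun_inverse[of U h] by (simp add: divide_inverse)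

lemma smooth_fun_sum:
  assumes "open U" "finite A" "\<And>a. a \<in> A \<Longrightarrow> smooth_fun U (f a)"
  shows "smooth_fun U (\<lambda>y. \<Sum>a\<in>A. f a y)"
  using assms(2,3) by (induction A rule: finite_induct) (auto simp: smooth_fun_const smooth_fun_add[OF assms(1)])

lemma smooth_fun_prod:
  assumes "open U" "finite A" "\<And>a. a \<in> A \<Longrightarrow> smooth_fun U (f a)"
  shows "smooth_fun U (\<lambda>y. \<Prod>a\<in>A. f a y)"
  using assms(2,3) by (induction A rule: finite_induct) (auto simp: smooth_fun_const smooth_fun_mult[OF assms(1)])

lemma smooth_fun_if_zero: "smooth_fun U f \<Longrightarrow> smooth_fun U (\<lambda>y. if P then f y else 0)"
  by (cases P) (simp_all add: smooth_fun_const)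

lemma mult_if_zero [simp]: "(a::real) * (if P then x else 0) = (if P then a * x else 0)"
  "(if P then x else 0) * (a::real) = (if P then x * a else 0)" by auto

lemma sum_mult_delta [simp]: "(\<Sum>l\<in>(UNIV::'n::finite set). f l * (if l = b then 1 else 0)) = (f b :: real)"
  by simp

lemma sum_if_const_zero [simp]: "(\<Sum>j\<in>A. if P then f j else 0) = (if P then sum f A else 0)"
  by simp

lemma sum_swap_inner: "(\<Sum>i\<in>A. \<Sum>j\<in>B. \<Sum>k\<in>C. f i j k) = (\<Sum>i\<in>A. \<Sum>k\<in>C. \<Sum>j\<in>B. f i j k)"
  by (rule sum.cong[OF refl], rule sum.swap)

lemma sum_swap_inner2: "(\<Sum>i\<in>A. \<Sum>j\<in>B. \<Sum>k\<in>C. \<Sum>l\<in>D. f i j k l) = (\<Sum>i\<in>A. \<Sum>j\<in>B. \<Sum>l\<in>D. \<Sum>k\<in>C. f i j k l)"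
  by (rule sum.cong[OF refl], rule sum_swap_inner)

lemma sum_rotate3: "(\<Sum>i\<in>A. \<Sum>j\<in>B. \<Sum>k\<in>C. f i j k) = (\<Sum>k\<in>C. \<Sum>i\<in>A. \<Sum>j\<in>B. f i j k)"
  by (subst sum_swap_inner) (rule sum.swap)

lemma sum_rotate4: "(\<Sum>i\<in>A. \<Sum>j\<in>B. \<Sum>k\<in>C. \<Sum>l\<in>D. f i j k l) = (\<Sum>j\<in>B. \<Sum>k\<in>C. \<Sum>l\<in>D. \<Sum>i\<in>A. f i j k l)"
  by (subst sum.swap) (rule sum.cong[OF refl], rule sum_rotate3[symmetric])

lemma sum_swap_pairs: "(\<Sum>i\<in>A. \<Sum>j\<in>B. \<Sum>k\<in>C. \<Sum>l\<in>D. f i j k l) = (\<Sum>k\<in>C. \<Sum>l\<in>D. \<Sum>i\<in>A. \<Sum>j\<in>B. f i j k l)"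
  by (subst sum_rotate4, subst sum_rotate4) (rule refl)

section \<open>The inverse metric\<close>

lemma matrix_inv_inverse:
  fixes A :: "real^'n^'n"
  assumes "invertible A"
  shows "A ** matrix_inv A = mat 1" and "matrix_inv A ** A = mat 1"
proof -
  have "\<exists>A'. A ** A' = mat 1 \<and> A' ** A = mat 1" using assms unfolding invertible_def by blast
  then have "A ** matrix_inv A = mat 1 \<and> matrix_inv A ** A = mat 1"
    unfolding matrix_inv_def by (rule someI_ex)
  then show "A ** matrix_inv A = mat 1" and "matrix_inv A ** A = mat 1" by auto
qed

lemma matrix_inv_unique:
  fixes A :: "real^'n^'n"
  assumes "invertible A" "A ** B = mat 1"
  shows "matrix_inv A = B"
proof -
  have "matrix_inv A = matrix_inv A ** (A ** B)" using assms(2) by simp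
  also have "\<dots> = B" by (simp add: matrix_mul_assoc matrix_inv_inverse(2)[OF assms(1)])
  finally show ?thesis .
qed

lemma riem_metric_invertible:
  assumes "riem_metric U g" "x \<in> U"
  shows "invertible (g x)"
proof -
  have pos: "\<And>\<xi>. \<xi> \<noteq> 0 \<Longrightarrow> \<xi> \<bullet> (g x *v \<xi>) > 0" using assms unfolding riem_metric_def by blast
  have "inj ((*v) (g x))"
  proof (rule injI)
    fix a b assume "g x *v a = g x *v b"
    then have "g x *v (a - b) = 0" by (simp add: matrix_vector_mult_diff_distrib)
    then show "a = b" using pos[of "a - b"] by (cases "a - b = 0") auto
  qed
  then show ?thesis using matrix_left_invertible_injective invertible_left_inverse by blast
qed

lemma ginv_inverse:
  assumes "riem_metric U g" "x \<in> U"
  shows "ginv g x ** g x = mat 1" "g x ** ginv g x = mat 1"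
  unfolding ginv_def using matrix_inv_inverse[OF riem_metric_invertible[OF assms]] by auto

lemma riem_metric_sym: assumes "riem_metric U g" "x \<in> U" shows "g x $ i $ j = g x $ j $ i"
proof -
  have "transpose (g x) = g x" using assms unfolding riem_metric_def by blast
  then have "transpose (g x) $ j $ i = g x $ j $ i" by simp
  then show ?thesis by (simp add: transpose_def)
qed

lemma ginv_sym:
  assumes "riem_metric U g" "x \<in> U"
  shows "ginv g x $ i $ j = ginv g x $ j $ i"
proof -
  have t: "transpose (g x) = g x" using assms unfolding riem_metric_def by blast
  have "transpose (ginv g x) ** g x = transpose (transpose (g x) ** ginv g x)"
    by (simp add: matrix_transpose_mul)
  also have "\<dots> = mat 1" using ginv_inverse(2)[OF assms] t by simp
  finally have a: "transpose (ginv g x) ** g x = mat 1" .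
  have "transpose (ginv g x) = transpose (ginv g x) ** (g x ** ginv g x)"
    using ginv_inverse(2)[OF assms] by simp
  also have "\<dots> = ginv g x" using a by (simp add: matrix_mul_assoc)
  finally have "transpose (ginv g x) = ginv g x" .
  then have "transpose (ginv g x) $ j $ i = ginv g x $ j $ i" by simp
  then show ?thesis by (simp add: transpose_def)
qed

lemma sum_ginv_metric: "riem_metric U g \<Longrightarrow> x \<in> U \<Longrightarrow>
  (\<Sum>l\<in>UNIV. ginv g x $ i $ l * g x $ l $ j) = (if i = j then 1 else 0)"
  using ginv_inverse(1)[of U g x] by (simp add: matrix_matrix_mult_def mat_def vec_eq_iff)

lemma sum_metric_ginv: "riem_metric U g \<Longrightarrow> x \<in> U \<Longrightarrow>
  (\<Sum>l\<in>UNIV. g x $ i $ l * ginv g x $ l $ j) = (if i = j then 1 else 0)"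
  using ginv_inverse(2)[of U g x] by (simp add: matrix_matrix_mult_def mat_def vec_eq_iff)

lemma riem_metric_smooth: "riem_metric U g \<Longrightarrow> smooth_fun U (\<lambda>y. g y $ i $ j)"
  unfolding riem_metric_def by blast

lemma smooth_fun_det:
  fixes M :: "real^'n::finite \<Rightarrow> real^'n^'n"
  assumes "open U" "\<And>i j. smooth_fun U (\<lambda>y. M y $ i $ j)"
  shows "smooth_fun U (\<lambda>y. det (M y))"
  unfolding det_def
proof (rule smooth_fun_sum[OF assms(1)])
  fix p :: "'n \<Rightarrow> 'n"
  show "smooth_fun U (\<lambda>y. of_int (sign p) * (\<Prod>i\<in>UNIV. M y $ i $ p i))"
    by (intro smooth_fun_mult[OF assms(1) smooth_fun_const] smooth_fun_prod[OF assms(1)]) (simp_all add: assms(2))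
qed (simp add: finite_permutations)

lemma ginv_cramer:
  assumes "riem_metric U g" "x \<in> U"
  shows "ginv g x $ k $ j = det (\<chi> i l. if l = k then (if i = j then 1 else 0) else g x $ i $ l) / det (g x)"
proof -
  let ?b = "axis j (1::real)"
  have d: "det (g x) \<noteq> 0" using riem_metric_invertible[OF assms] invertible_det_nz by blast
  have "g x *v (ginv g x *v ?b) = ?b"
    by (simp add: matrix_vector_mul_assoc ginv_inverse(2)[OF assms])
  then have "ginv g x *v ?b = (\<chi> k. det(\<chi> i l. if l=k then ?b$i else g x$i$l) / det (g x))"
    by (rule cramer[OF d, THEN iffD1])
  then have A: "(ginv g x *v ?b) $ k = det(\<chi> i l. if l=k then ?b$i else g x$i$l) / det (g x)" by simp
  have C: "(\<chi> i l. if l=k then ?b$i else g x$i$l) = (\<chi> i l. if l = k then (if i = j then 1 else 0) else g x $ i $ l)"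
    by (simp add: axis_def vec_eq_iff)
  have B: "(ginv g x *v ?b) $ k = ginv g x $ k $ j"
    unfolding matrix_vector_mult_def axis_def by (simp add: if_distrib[of "\<lambda>t. _ * t"] cong: if_cong)
  have "ginv g x $ k $ j = det(\<chi> i l. if l=k then ?b$i else g x$i$l) / det (g x)" using A B by simp
  then show ?thesis unfolding C .
qed

lemma smooth_fun_ginv:
  assumes "open U" "riem_metric U g"
  shows "smooth_fun U (\<lambda>y. ginv g y $ k $ j)"
proof -
  note g_smooth = riem_metric_smooth[OF assms(2)]
  have "smooth_fun U (\<lambda>y. det (\<chi> i l. if l = k then (if i = j then 1 else 0) else g y $ i $ l) / det (g y))"
  proof (rule smooth_fun_divide[OF assms(1)])
    show "\<forall>y\<in>U. det (g y) \<noteq> 0" using riem_metric_invertible[OF assms(2)] invertible_det_nz by blast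
    show "smooth_fun U (\<lambda>y. det (g y))" by (rule smooth_fun_det[OF assms(1) g_smooth])
    show "smooth_fun U (\<lambda>y. det (\<chi> i l. if l = k then (if i = j then 1 else 0) else g y $ i $ l))"
    proof (rule smooth_fun_det[OF assms(1)])
      fix a b
      show "smooth_fun U (\<lambda>y. (\<chi> i l. if l = k then (if i = j then 1 else 0) else g y $ i $ l) $ a $ b)"
        by (cases "b = k") (simp_all add: smooth_fun_const g_smooth)
    qed
  qed
  moreover have "\<forall>y\<in>U. det (\<chi> i l. if l = k then (if i = j then 1 else 0) else g y $ i $ l) / det (g y) = ginv g y $ k $ j"
  proof
    fix y assume "y \<in> U"
    show "det (\<chi> i l. if l = k then (if i = j then 1 else 0) else g y $ i $ l) / det (g y) = ginv g y $ k $ j"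
      by (rule ginv_cramer[OF assms(2) \<open>y \<in> U\<close>, symmetric])
  qed
  ultimately show ?thesis by (rule smooth_fun_cong[OF assms(1), rotated])
qed

lemma pd_ginv:
  assumes U: "open U" and g: "riem_metric U g" and x: "x \<in> U"
  shows "pd k (\<lambda>y. ginv g y $ a $ b) x =
     - (\<Sum>c\<in>UNIV. \<Sum>d\<in>UNIV. ginv g x $ a $ c * pd k (\<lambda>y. g y $ c $ d) x * ginv g x $ d $ b)"
proof -
  note g_smooth = riem_metric_smooth[OF g]
  have ginv_smooth: "smooth_fun U (\<lambda>y. ginv g y $ i $ l)" for i l by (rule smooth_fun_ginv[OF U g])
  define dH where "dH l = pd k (\<lambda>y. ginv g y $ a $ l) x" for l
  define dG where "dG l d = pd k (\<lambda>y. g y $ l $ d) x" for l d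
  define H where "H i l = ginv g x $ i $ l" for i l
  define G where "G i l = g x $ i $ l" for i l
  have E: "(\<Sum>l\<in>UNIV. dH l * G l d + H a l * dG l d) = 0" for d
  proof -
    have "pd k (\<lambda>y. \<Sum>l\<in>UNIV. ginv g y $ a $ l * g y $ l $ d) x = (\<Sum>l\<in>UNIV. dH l * G l d + H a l * dG l d)"
      unfolding dH_def G_def H_def dG_def
      by (rule pd_sum_mult) (auto intro: smooth_fun_partial_differentiable[OF ginv_smooth x] smooth_fun_partial_differentiable[OF g_smooth x])
    moreover have "pd k (\<lambda>y. \<Sum>l\<in>UNIV. ginv g y $ a $ l * g y $ l $ d) x = pd k (\<lambda>y. if a = d then 1 else 0) x"
      by (rule pd_cong_open(1)[OF U x]) (simp add: sum_ginv_metric[OF g])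
    moreover have "pd k (\<lambda>y. if a = d then 1 else 0 :: real) x = 0" using pd_const by blast
    ultimately show ?thesis by simp
  qed
  have G_H_inverse: "(\<Sum>d\<in>UNIV. G l d * H d b) = (if l = b then 1 else 0)" for l
    unfolding G_def H_def by (rule sum_metric_ginv[OF g x])
  have "dH b = (\<Sum>l\<in>UNIV. dH l * (if l = b then 1 else 0))" by (rule sum_mult_delta[symmetric])
  also have "\<dots> = (\<Sum>l\<in>UNIV. \<Sum>d\<in>UNIV. dH l * G l d * H d b)"
    by (simp add: G_H_inverse[symmetric] sum_distrib_left mult.assoc)
  also have "\<dots> = (\<Sum>d\<in>UNIV. (\<Sum>l\<in>UNIV. dH l * G l d) * H d b)"
    by (subst sum.swap) (simp add: sum_distrib_right)
  also have "\<dots> = (\<Sum>d\<in>UNIV. (- (\<Sum>l\<in>UNIV. H a l * dG l d)) * H d b)"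
  proof (rule sum.cong[OF refl])
    fix d
    have "(\<Sum>l\<in>UNIV. dH l * G l d) = - (\<Sum>l\<in>UNIV. H a l * dG l d)"
      using E[of d] by (simp add: sum.distrib eq_neg_iff_add_eq_0)
    then show "(\<Sum>l\<in>UNIV. dH l * G l d) * H d b = (- (\<Sum>l\<in>UNIV. H a l * dG l d)) * H d b" by simp
  qed
  also have "\<dots> = - (\<Sum>c\<in>UNIV. \<Sum>d\<in>UNIV. H a c * dG c d * H d b)"
    by (subst sum.swap) (simp add: sum_distrib_right sum_negf)
  finally show ?thesis unfolding dH_def H_def dG_def .
qed

lemma coinner_scaleR_left: "coinner g x (c *\<^sub>R a) b = c * coinner g x a b"
  unfolding coinner_def by (simp add: sum_distrib_left mult_ac)
lemma coinner_scaleR_right: "coinner g x a (c *\<^sub>R b) = c * coinner g x a b"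
  unfolding coinner_def by (simp add: sum_distrib_left mult_ac)
lemma coinner_diff_left: "coinner g x (a - b) c = coinner g x a c - coinner g x b c"
  unfolding coinner_def by (simp add: algebra_simps sum_subtractf)
lemma coinner_diff_right: "coinner g x a (b - c) = coinner g x a b - coinner g x a c"
  unfolding coinner_def by (simp add: algebra_simps sum_subtractf)
lemma coinner_sym: "riem_metric U g \<Longrightarrow> x \<in> U \<Longrightarrow> coinner g x a b = coinner g x b a"
  unfolding coinner_def by (subst sum.swap) (simp add: ginv_sym mult_ac)

definition hess :: "'n::finite metric \<Rightarrow> (real^'n \<Rightarrow> real) \<Rightarrow> real^'n \<Rightarrow> 'n \<Rightarrow> 'n \<Rightarrow> real" where
  "hess g f x i j = pd i (pd j f) x - (\<Sum>k\<in>UNIV. chr g k i j x * pd k f x)"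

lemma lap_eq_hess: "lap g f x = (\<Sum>i\<in>UNIV. \<Sum>j\<in>UNIV. ginv g x $ i $ j * hess g f x i j)"
  unfolding lap_def hess_def ..

section \<open>Variation of the Ricci tensor under a change of Christoffel symbols\<close>

text \<open>Pointwise data: \<open>G\<close>, \<open>H\<close>, \<open>dG k i j\<close> stand for \<open>g\<^sub>i\<^sub>j\<close>, \<open>g\<^sup>i\<^sup>j\<close>, \<open>\<partial>\<^sub>k g\<^sub>i\<^sub>j\<close> and
  \<open>w i\<close>, \<open>dw k i\<close> for \<open>\<partial>\<^sub>i log u\<close>, \<open>\<partial>\<^sub>k \<partial>\<^sub>i log u\<close>.  \<open>T\<close> is the change of the Christoffel
  symbols \<open>Gam\<close> under \<open>g \<mapsto> u\<^sup>-\<^sup>2 g\<close>; \<open>dH\<close>, \<open>dW\<close>, \<open>dT\<close> are the derivatives of \<open>H\<close>, \<open>W\<close>, \<open>T\<close> written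
  in terms of the data, and \<open>Dric\<close> is the resulting change of the Ricci tensor.\<close>
locale christoffel_variation =
  fixes G H :: "'n::finite \<Rightarrow> 'n \<Rightarrow> real" and dG :: "'n \<Rightarrow> 'n \<Rightarrow> 'n \<Rightarrow> real"
    and w :: "'n \<Rightarrow> real" and dw :: "'n \<Rightarrow> 'n \<Rightarrow> real"
  assumes H_G_inverse: "\<And>i j. (\<Sum>l\<in>UNIV. H i l * G l j) = (if i = j then 1 else 0)"
    and G_H_inverse: "\<And>i j. (\<Sum>l\<in>UNIV. G i l * H l j) = (if i = j then 1 else 0)"
    and G_sym: "\<And>i j. G i j = G j i" and H_sym: "\<And>i j. H i j = H j i"
    and dG_sym: "\<And>k i j. dG k i j = dG k j i"
begin

definition "Gam k i j = (1/2) * (\<Sum>l\<in>UNIV. H k l * (dG i j l + dG j i l - dG l i j))"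
definition "W k = (\<Sum>l\<in>UNIV. H k l * w l)"
definition "dH k a b = - (\<Sum>c\<in>UNIV. \<Sum>d\<in>UNIV. H a c * dG k c d * H d b)"
definition "dW k' k = (\<Sum>l\<in>UNIV. dH k' k l * w l + H k l * dw k' l)"
definition "T k i j = - ((if k = j then w i else 0) + (if k = i then w j else 0) - G i j * W k)"
definition "dT k' k i j = - ((if k = j then dw k' i else 0) + (if k = i then dw k' j else 0)
      - (dG k' i j * W k + G i j * dW k' k))"
definition "Dric i j = (\<Sum>k\<in>UNIV. dT k k i j - dT j k i k + (\<Sum>l\<in>UNIV.
      Gam k k l * T l i j + T k k l * Gam l i j + T k k l * T l i j
    - Gam k j l * T l i k - T k j l * Gam l i k - T k j l * T l i k))"

lemma sum_G_H_mult: "(\<Sum>k\<in>UNIV. G i k * (\<Sum>l\<in>UNIV. H k l * f l)) = f i"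
proof -
  have "(\<Sum>k\<in>UNIV. G i k * (\<Sum>l\<in>UNIV. H k l * f l)) = (\<Sum>k\<in>UNIV. \<Sum>l\<in>UNIV. G i k * H k l * f l)"
    by (simp add: sum_distrib_left mult.assoc)
  also have "\<dots> = (\<Sum>l\<in>UNIV. (\<Sum>k\<in>UNIV. G i k * H k l) * f l)"
    by (subst sum.swap) (simp add: sum_distrib_right)
  also have "\<dots> = f i" by (simp add: G_H_inverse)
  finally show ?thesis .
qed

lemma sum_G_W: "(\<Sum>k\<in>UNIV. G i k * W k) = w i"
  unfolding W_def by (rule sum_G_H_mult)

lemma sum_H_G: "(\<Sum>i\<in>UNIV. H i j * G i k) = (if j = k then 1 else 0)"
  using H_G_inverse[of j k] by (simp add: H_sym[of _ j])

lemma sum_H_w: "(\<Sum>i\<in>UNIV. H i j * w i) = W j"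
  unfolding W_def by (simp add: H_sym[of _ j])

lemma trace_H_G: "(\<Sum>i\<in>UNIV. \<Sum>j\<in>UNIV. H i j * G i j) = real CARD('n)"
proof -
  have "(\<Sum>i\<in>UNIV. \<Sum>j\<in>UNIV. H i j * G i j) = (\<Sum>i\<in>UNIV. \<Sum>j\<in>UNIV. H i j * G j i)"
    by (simp add: G_sym)
  also have "\<dots> = (\<Sum>i\<in>(UNIV::'n set). 1)" by (simp add: H_G_inverse)
  finally show ?thesis by simp
qed

lemma T_contract_13: "(\<Sum>k\<in>UNIV. T k i k) = - real CARD('n) * w i"
proof -
  have "T k i k = G i k * W k - w i - (if k = i then w k else 0)" for k by (simp add: T_def)
  then have "(\<Sum>k\<in>UNIV. T k i k) = (\<Sum>k\<in>UNIV. G i k * W k) - (\<Sum>k\<in>(UNIV::'n set). w i) - (\<Sum>k\<in>UNIV. if k = i then w k else 0)"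
    by (simp add: sum_subtractf)
  then show ?thesis by (simp add: sum_G_W)
qed

lemma contr_H_T: "(\<Sum>i\<in>UNIV. \<Sum>j\<in>UNIV. H i j * T l i j) = (real CARD('n) - 2) * W l"
proof -
  have a: "(\<Sum>i\<in>UNIV. \<Sum>j\<in>UNIV. H i j * (if l = j then w i else 0)) = W l"
    by (simp add: W_def H_sym if_distrib[of "\<lambda>t. _ * t"] cong: if_cong)
  have b: "(\<Sum>i\<in>UNIV. \<Sum>j\<in>UNIV. H i j * (if l = i then w j else 0)) = W l"
    by (simp add: W_def if_distrib[of "\<lambda>t. _ * t"] cong: if_cong)
  have c: "(\<Sum>i\<in>UNIV. \<Sum>j\<in>UNIV. H i j * (G i j * W l)) = real CARD('n) * W l"
    using trace_H_G by (simp add: sum_distrib_right[symmetric] mult.assoc[symmetric])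
  have "(\<Sum>i\<in>UNIV. \<Sum>j\<in>UNIV. H i j * T l i j) =
    - ((\<Sum>i\<in>UNIV. \<Sum>j\<in>UNIV. H i j * (if l = j then w i else 0))
     + (\<Sum>i\<in>UNIV. \<Sum>j\<in>UNIV. H i j * (if l = i then w j else 0))
     - (\<Sum>i\<in>UNIV. \<Sum>j\<in>UNIV. H i j * (G i j * W l)))"
    by (simp add: T_def sum.distrib sum_subtractf sum_negf algebra_simps)
  also have "\<dots> = (real CARD('n) - 2) * W l" using a b c by (simp add: algebra_simps)
  finally show ?thesis .
qed

lemma T_eq: "T k i j = G i j * W k - (if k = j then w i else 0) - (if k = i then w j else 0)"
  by (simp add: T_def)

lemma T_sym: "T k i j = T k j i"
  by (simp add: T_eq G_sym)

lemma Gam_sym: "Gam k i j = Gam k j i"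
  unfolding Gam_def by (simp add: dG_sym add.commute)

lemma sum_G_dH: "(\<Sum>k\<in>UNIV. G i k * dH j k l) = - (\<Sum>d\<in>UNIV. dG j i d * H d l)"
proof -
  have "(\<Sum>k\<in>UNIV. G i k * dH j k l) = - (\<Sum>k\<in>UNIV. G i k * (\<Sum>c\<in>UNIV. H k c * (\<Sum>d\<in>UNIV. dG j c d * H d l)))"
    by (simp add: dH_def sum_negf sum_distrib_left mult.assoc)
  also have "\<dots> = - (\<Sum>d\<in>UNIV. dG j i d * H d l)" by (simp add: sum_G_H_mult)
  finally show ?thesis .
qed

lemma dT_trace: "(\<Sum>k\<in>UNIV. dT j k i k) = - real CARD('n) * dw j i"
proof -
  have a: "(\<Sum>k\<in>UNIV. G i k * (\<Sum>l\<in>UNIV. dH j k l * w l)) = - (\<Sum>d\<in>UNIV. dG j i d * W d)"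
  proof -
    have "(\<Sum>k\<in>UNIV. G i k * (\<Sum>l\<in>UNIV. dH j k l * w l)) = (\<Sum>l\<in>UNIV. (\<Sum>k\<in>UNIV. G i k * dH j k l) * w l)"
      by (simp add: sum_distrib_left sum_distrib_right mult.assoc) (rule sum.swap)
    also have "\<dots> = (\<Sum>l\<in>UNIV. - (\<Sum>d\<in>UNIV. dG j i d * H d l) * w l)" by (simp add: sum_G_dH)
    also have "\<dots> = - (\<Sum>d\<in>UNIV. dG j i d * W d)"
      by (simp add: W_def sum_distrib_left sum_distrib_right sum_negf mult.assoc) (rule sum.swap)
    finally show ?thesis .
  qed
  have b: "(\<Sum>k\<in>UNIV. G i k * (\<Sum>l\<in>UNIV. H k l * dw j l)) = dw j i" by (rule sum_G_H_mult)
  have e: "(\<Sum>k\<in>UNIV. dG j i k * W k + G i k * dW j k) = dw j i"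
  proof -
    have "(\<Sum>k\<in>UNIV. dG j i k * W k + G i k * dW j k) = (\<Sum>k\<in>UNIV. dG j i k * W k)
       + (\<Sum>k\<in>UNIV. G i k * (\<Sum>l\<in>UNIV. dH j k l * w l)) + (\<Sum>k\<in>UNIV. G i k * (\<Sum>l\<in>UNIV. H k l * dw j l))"
      by (simp add: dW_def sum.distrib distrib_left)
    then show ?thesis using a b by simp
  qed
  have "dT j k i k = (dG j i k * W k + G i k * dW j k) - dw j i - (if k = i then dw j k else 0)" for k
    by (simp add: dT_def)
  then have "(\<Sum>k\<in>UNIV. dT j k i k) = (\<Sum>k\<in>UNIV. dG j i k * W k + G i k * dW j k) - (\<Sum>k\<in>(UNIV::'n set). dw j i)
      - (\<Sum>k\<in>UNIV. if k = i then dw j k else 0)"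
    by (simp add: sum_subtractf)
  then show ?thesis using e by simp
qed

definition "tr_dw = (\<Sum>i\<in>UNIV. \<Sum>j\<in>UNIV. H i j * dw i j)"
definition "tr_dG_W = (\<Sum>i\<in>UNIV. \<Sum>j\<in>UNIV. \<Sum>k\<in>UNIV. H i j * dG k i j * W k)"
definition "div_dG_W = (\<Sum>k\<in>UNIV. \<Sum>c\<in>UNIV. \<Sum>d\<in>UNIV. H k c * dG k c d * W d)"
definition "tr_Gam_w = (\<Sum>l\<in>UNIV. \<Sum>i\<in>UNIV. \<Sum>j\<in>UNIV. H i j * Gam l i j * w l)"
definition "w_sq = (\<Sum>l\<in>UNIV. w l * W l)"

lemma dW_trace: "(\<Sum>k\<in>UNIV. dW k k) = tr_dw - div_dG_W"
proof -
  have a: "(\<Sum>k\<in>UNIV. \<Sum>l\<in>UNIV. dH k k l * w l) = - div_dG_W"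
  proof -
    have "(\<Sum>k\<in>UNIV. \<Sum>l\<in>UNIV. dH k k l * w l)
        = - (\<Sum>k\<in>UNIV. \<Sum>l\<in>UNIV. \<Sum>c\<in>UNIV. \<Sum>d\<in>UNIV. H k c * dG k c d * H d l * w l)"
      by (simp add: dH_def sum_negf sum_distrib_right)
    also have "\<dots> = - (\<Sum>k\<in>UNIV. \<Sum>c\<in>UNIV. \<Sum>d\<in>UNIV. \<Sum>l\<in>UNIV. H k c * dG k c d * H d l * w l)"
    proof -
      have *: "(\<Sum>l\<in>UNIV. \<Sum>c\<in>UNIV. \<Sum>d\<in>UNIV. f c d l) = (\<Sum>c\<in>UNIV. \<Sum>d\<in>UNIV. \<Sum>l\<in>UNIV. f c d l)"
        for f :: "'n \<Rightarrow> 'n \<Rightarrow> 'n \<Rightarrow> real"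
        by (subst sum.swap) (rule sum.cong[OF refl], rule sum.swap)
      show ?thesis by (rule arg_cong[where f=uminus], rule sum.cong[OF refl], rule *)
    qed
    also have "\<dots> = - div_dG_W"
      by (simp add: div_dG_W_def W_def sum_distrib_left mult.assoc)
    finally show ?thesis .
  qed
  have "(\<Sum>k\<in>UNIV. dW k k) = (\<Sum>k\<in>UNIV. \<Sum>l\<in>UNIV. dH k k l * w l) + tr_dw"
    by (simp add: dW_def sum.distrib tr_dw_def)
  then show ?thesis using a by simp
qed

lemma contr_dT_kkij: "(\<Sum>i\<in>UNIV. \<Sum>j\<in>UNIV. H i j * (\<Sum>k\<in>UNIV. dT k k i j))
   = (real CARD('n) - 2) * tr_dw + tr_dG_W - real CARD('n) * div_dG_W"
proof -
  have e1: "(\<Sum>k\<in>UNIV. dT k k i j) = (\<Sum>k\<in>UNIV. dG k i j * W k) + G i j * (\<Sum>k\<in>UNIV. dW k k) - dw j i - dw i j" for i j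
  proof -
    have "dT k k i j = (dG k i j * W k + G i j * dW k k) - (if k = j then dw k i else 0) - (if k = i then dw k j else 0)" for k
      by (simp add: dT_def)
    then have "(\<Sum>k\<in>UNIV. dT k k i j) = (\<Sum>k\<in>UNIV. dG k i j * W k + G i j * dW k k)
       - (\<Sum>k\<in>UNIV. if k = j then dw k i else 0) - (\<Sum>k\<in>UNIV. if k = i then dw k j else 0)"
      by (simp add: sum_subtractf)
    then show ?thesis by (simp add: sum.distrib sum_distrib_left)
  qed
  have swapH: "(\<Sum>i\<in>UNIV. \<Sum>j\<in>UNIV. H i j * dw j i) = tr_dw"
    unfolding tr_dw_def by (subst sum.swap) (simp add: H_sym)
  define X where "X = (\<Sum>k\<in>UNIV. dW k k)"
  have pt: "H i j * (\<Sum>k\<in>UNIV. dT k k i j) = H i j * (\<Sum>k\<in>UNIV. dG k i j * W k) + (H i j * G i j) * X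
      - H i j * dw j i - H i j * dw i j" for i j
    unfolding e1 X_def by (simp add: algebra_simps)
  have "(\<Sum>i\<in>UNIV. \<Sum>j\<in>UNIV. H i j * (\<Sum>k\<in>UNIV. dT k k i j))
     = (\<Sum>i\<in>UNIV. \<Sum>j\<in>UNIV. H i j * (\<Sum>k\<in>UNIV. dG k i j * W k))
       + (\<Sum>i\<in>UNIV. \<Sum>j\<in>UNIV. (H i j * G i j) * X)
       - (\<Sum>i\<in>UNIV. \<Sum>j\<in>UNIV. H i j * dw j i) - tr_dw"
    unfolding pt by (simp only: sum.distrib sum_subtractf tr_dw_def)
  also have "\<dots> = tr_dG_W + real CARD('n) * (tr_dw - div_dG_W) - tr_dw - tr_dw"
  proof -
    have "(\<Sum>i\<in>UNIV. \<Sum>j\<in>UNIV. (H i j * G i j) * X) = real CARD('n) * (tr_dw - div_dG_W)"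
      using trace_H_G dW_trace unfolding X_def by (simp add: sum_distrib_right[symmetric])
    moreover have "(\<Sum>i\<in>UNIV. \<Sum>j\<in>UNIV. H i j * (\<Sum>k\<in>UNIV. dG k i j * W k)) = tr_dG_W"
      by (simp add: tr_dG_W_def sum_distrib_left mult.assoc)
    ultimately show ?thesis using swapH by simp
  qed
  finally show ?thesis by (simp add: algebra_simps)
qed

lemma contr_dT_jkik: "(\<Sum>i\<in>UNIV. \<Sum>j\<in>UNIV. H i j * (\<Sum>k\<in>UNIV. dT j k i k)) = - real CARD('n) * tr_dw"
proof -
  have "(\<Sum>i\<in>UNIV. \<Sum>j\<in>UNIV. H i j * (\<Sum>k\<in>UNIV. dT j k i k)) = - real CARD('n) * (\<Sum>i\<in>UNIV. \<Sum>j\<in>UNIV. H i j * dw j i)"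
    by (simp add: dT_trace sum_distrib_left mult_ac sum_negf)
  also have "(\<Sum>i\<in>UNIV. \<Sum>j\<in>UNIV. H i j * dw j i) = tr_dw"
    unfolding tr_dw_def by (subst sum.swap) (simp add: H_sym)
  finally show ?thesis .
qed

lemma Gam_trace: "(\<Sum>k\<in>UNIV. Gam k k l) = (1/2) * (\<Sum>k\<in>UNIV. \<Sum>a\<in>UNIV. H k a * dG l k a)"
proof -
  have X: "(\<Sum>k\<in>UNIV. \<Sum>a\<in>UNIV. H k a * dG a k l) = (\<Sum>k\<in>UNIV. \<Sum>a\<in>UNIV. H k a * dG k l a)"
    by (subst sum.swap) (simp add: H_sym dG_sym)
  have "(\<Sum>k\<in>UNIV. Gam k k l) = (1/2) * ((\<Sum>k\<in>UNIV. \<Sum>a\<in>UNIV. H k a * dG k l a)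
     + (\<Sum>k\<in>UNIV. \<Sum>a\<in>UNIV. H k a * dG l k a) - (\<Sum>k\<in>UNIV. \<Sum>a\<in>UNIV. H k a * dG a k l))"
    by (simp add: Gam_def sum_distrib_left[symmetric] distrib_left right_diff_distrib sum.distrib sum_subtractf sum_divide_distrib)
  then show ?thesis using X by simp
qed

lemma contr_Gam_kkl_T_lij: "(\<Sum>i\<in>UNIV. \<Sum>j\<in>UNIV. H i j * (\<Sum>k\<in>UNIV. \<Sum>l\<in>UNIV. Gam k k l * T l i j))
   = (real CARD('n) - 2) * tr_dG_W / 2"
proof -
  have "(\<Sum>i\<in>UNIV. \<Sum>j\<in>UNIV. H i j * (\<Sum>k\<in>UNIV. \<Sum>l\<in>UNIV. Gam k k l * T l i j))
     = (\<Sum>i\<in>UNIV. \<Sum>j\<in>UNIV. \<Sum>k\<in>UNIV. \<Sum>l\<in>UNIV. Gam k k l * (H i j * T l i j))"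
    by (simp add: sum_distrib_left mult.left_commute)
  also have "\<dots> = (\<Sum>k\<in>UNIV. \<Sum>l\<in>UNIV. \<Sum>i\<in>UNIV. \<Sum>j\<in>UNIV. Gam k k l * (H i j * T l i j))"
    by (rule sum_swap_pairs)
  also have "\<dots> = (\<Sum>k\<in>UNIV. \<Sum>l\<in>UNIV. Gam k k l * ((real CARD('n) - 2) * W l))"
    by (simp add: sum_distrib_left[symmetric] contr_H_T)
  also have "\<dots> = (real CARD('n) - 2) * (\<Sum>l\<in>UNIV. (\<Sum>k\<in>UNIV. Gam k k l) * W l)"
    by (subst sum.swap) (simp add: sum_distrib_left sum_distrib_right mult_ac)
  also have "\<dots> = (real CARD('n) - 2) * (1/2) * (\<Sum>l\<in>UNIV. \<Sum>k\<in>UNIV. \<Sum>a\<in>UNIV. H k a * dG l k a * W l)"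
    by (simp add: Gam_trace sum_distrib_left sum_distrib_right mult_ac)
  also have "(\<Sum>l\<in>UNIV. \<Sum>k\<in>UNIV. \<Sum>a\<in>UNIV. H k a * dG l k a * W l) = tr_dG_W"
    unfolding tr_dG_W_def by (rule sum_rotate3[symmetric])
  finally show ?thesis by simp
qed

lemma T_contract_12: "(\<Sum>k\<in>UNIV. T k k l) = - real CARD('n) * w l"
  using T_contract_13[of l] by (simp add: T_sym[of _ _ l])

lemma contr_T_kkl_Gam_lij: "(\<Sum>i\<in>UNIV. \<Sum>j\<in>UNIV. H i j * (\<Sum>k\<in>UNIV. \<Sum>l\<in>UNIV. T k k l * Gam l i j))
   = - real CARD('n) * tr_Gam_w"
proof -
  have "(\<Sum>i\<in>UNIV. \<Sum>j\<in>UNIV. H i j * (\<Sum>k\<in>UNIV. \<Sum>l\<in>UNIV. T k k l * Gam l i j))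
     = (\<Sum>i\<in>UNIV. \<Sum>j\<in>UNIV. \<Sum>l\<in>UNIV. \<Sum>k\<in>UNIV. T k k l * (H i j * Gam l i j))"
    by (subst sum_swap_inner2) (simp add: sum_distrib_left mult.left_commute)
  also have "\<dots> = (\<Sum>i\<in>UNIV. \<Sum>j\<in>UNIV. \<Sum>l\<in>UNIV. (- real CARD('n) * w l) * (H i j * Gam l i j))"
    by (simp add: sum_distrib_right[symmetric] T_contract_12)
  also have "\<dots> = (\<Sum>l\<in>UNIV. \<Sum>i\<in>UNIV. \<Sum>j\<in>UNIV. (- real CARD('n) * w l) * (H i j * Gam l i j))"
    by (rule sum_rotate3)
  also have "\<dots> = - real CARD('n) * tr_Gam_w"
    by (simp add: tr_Gam_w_def sum_distrib_left mult_ac sum_negf)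
  finally show ?thesis .
qed

lemma contr_T_kkl_T_lij: "(\<Sum>i\<in>UNIV. \<Sum>j\<in>UNIV. H i j * (\<Sum>k\<in>UNIV. \<Sum>l\<in>UNIV. T k k l * T l i j))
   = - real CARD('n) * (real CARD('n) - 2) * w_sq"
proof -
  have "(\<Sum>i\<in>UNIV. \<Sum>j\<in>UNIV. H i j * (\<Sum>k\<in>UNIV. \<Sum>l\<in>UNIV. T k k l * T l i j))
     = (\<Sum>i\<in>UNIV. \<Sum>j\<in>UNIV. \<Sum>k\<in>UNIV. \<Sum>l\<in>UNIV. T k k l * (H i j * T l i j))"
    by (simp add: sum_distrib_left mult.left_commute)
  also have "\<dots> = (\<Sum>k\<in>UNIV. \<Sum>l\<in>UNIV. \<Sum>i\<in>UNIV. \<Sum>j\<in>UNIV. T k k l * (H i j * T l i j))"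
    by (rule sum_swap_pairs)
  also have "\<dots> = (\<Sum>k\<in>UNIV. \<Sum>l\<in>UNIV. T k k l * ((real CARD('n) - 2) * W l))"
    by (simp add: sum_distrib_left[symmetric] contr_H_T)
  also have "\<dots> = (\<Sum>l\<in>UNIV. (\<Sum>k\<in>UNIV. T k k l) * ((real CARD('n) - 2) * W l))"
    by (subst sum.swap) (simp add: sum_distrib_right)
  also have "\<dots> = - real CARD('n) * (real CARD('n) - 2) * w_sq"
    by (simp add: T_contract_12 w_sq_def sum_distrib_left mult_ac sum_negf)
  finally show ?thesis .
qed

lemma contr_Gam_kjl_T_lik: "(\<Sum>i\<in>UNIV. \<Sum>j\<in>UNIV. H i j * (\<Sum>k\<in>UNIV. \<Sum>l\<in>UNIV. Gam k j l * T l i k)) = - tr_Gam_w"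
proof -
  have inner: "(\<Sum>k\<in>UNIV. \<Sum>l\<in>UNIV. Gam k j l * T l i k) =
      (\<Sum>k\<in>UNIV. \<Sum>l\<in>UNIV. Gam k j l * (G i k * W l)) - (\<Sum>k\<in>UNIV. Gam k j k) * w i - (\<Sum>k\<in>UNIV. Gam k j i * w k)" for i j
  proof -
    have "Gam k j l * T l i k = Gam k j l * (G i k * W l) - (if l = k then Gam k j k * w i else 0)
       - (if l = i then Gam k j i * w k else 0)" for k l
      by (simp add: T_eq algebra_simps)
    then have "(\<Sum>k\<in>UNIV. \<Sum>l\<in>UNIV. Gam k j l * T l i k) =
      (\<Sum>k\<in>UNIV. (\<Sum>l\<in>UNIV. Gam k j l * (G i k * W l)) - Gam k j k * w i - Gam k j i * w k)"
      by (simp add: sum_subtractf)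
    then show ?thesis by (simp add: sum_subtractf sum_distrib_right)
  qed
  define A where "A = (\<Sum>i\<in>UNIV. \<Sum>j\<in>UNIV. H i j * (\<Sum>k\<in>UNIV. \<Sum>l\<in>UNIV. Gam k j l * (G i k * W l)))"
  define B where "B = (\<Sum>i\<in>UNIV. \<Sum>j\<in>UNIV. H i j * ((\<Sum>k\<in>UNIV. Gam k j k) * w i))"
  define C where "C = (\<Sum>i\<in>UNIV. \<Sum>j\<in>UNIV. H i j * (\<Sum>k\<in>UNIV. Gam k j i * w k))"
  have split: "(\<Sum>i\<in>UNIV. \<Sum>j\<in>UNIV. H i j * (\<Sum>k\<in>UNIV. \<Sum>l\<in>UNIV. Gam k j l * T l i k)) = A - B - C"
    unfolding A_def B_def C_def inner by (simp add: right_diff_distrib sum_subtractf)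
  have A: "A = (\<Sum>j\<in>UNIV. \<Sum>l\<in>UNIV. Gam j j l * W l)"
  proof -
    have "A = (\<Sum>i\<in>UNIV. \<Sum>j\<in>UNIV. \<Sum>k\<in>UNIV. \<Sum>l\<in>UNIV. (H i j * G i k) * (Gam k j l * W l))"
      unfolding A_def by (simp add: sum_distrib_left mult_ac)
    also have "\<dots> = (\<Sum>j\<in>UNIV. \<Sum>k\<in>UNIV. \<Sum>l\<in>UNIV. \<Sum>i\<in>UNIV. (H i j * G i k) * (Gam k j l * W l))"
      by (rule sum_rotate4)
    also have "\<dots> = (\<Sum>j\<in>UNIV. \<Sum>k\<in>UNIV. \<Sum>l\<in>UNIV. (if j = k then 1 else 0) * (Gam k j l * W l))"
      by (simp add: sum_distrib_right[symmetric] sum_H_G)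
    also have "\<dots> = (\<Sum>j\<in>UNIV. \<Sum>l\<in>UNIV. Gam j j l * W l)"
      by (subst sum_swap_inner) simp
    finally show ?thesis .
  qed
  have B: "B = (\<Sum>j\<in>UNIV. \<Sum>k\<in>UNIV. Gam k j k * W j)"
  proof -
    have "B = (\<Sum>j\<in>UNIV. \<Sum>i\<in>UNIV. H i j * w i * (\<Sum>k\<in>UNIV. Gam k j k))"
      unfolding B_def by (subst sum.swap) (simp add: mult_ac)
    also have "\<dots> = (\<Sum>j\<in>UNIV. W j * (\<Sum>k\<in>UNIV. Gam k j k))"
      by (simp add: sum_H_w[symmetric] sum_distrib_right)
    finally show ?thesis by (simp add: sum_distrib_left mult_ac)
  qed
  have AB: "A = B"
  proof -
    have "A = (\<Sum>l\<in>UNIV. \<Sum>j\<in>UNIV. Gam j l j * W l)"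
      unfolding A by (subst sum.swap) (simp add: Gam_sym)
    then show ?thesis unfolding B by simp
  qed
  have Cm: "C = tr_Gam_w"
  proof -
    have "C = (\<Sum>i\<in>UNIV. \<Sum>j\<in>UNIV. \<Sum>k\<in>UNIV. H i j * Gam k i j * w k)"
      unfolding C_def by (simp add: sum_distrib_left mult_ac Gam_sym)
    also have "\<dots> = tr_Gam_w" unfolding tr_Gam_w_def by (rule sum_rotate3)
    finally show ?thesis .
  qed
  show ?thesis using split AB Cm by simp
qed

lemma contr_T_kjl_Gam_lik: "(\<Sum>i\<in>UNIV. \<Sum>j\<in>UNIV. H i j * (\<Sum>k\<in>UNIV. \<Sum>l\<in>UNIV. T k j l * Gam l i k)) = - tr_Gam_w"
proof -
  have "(\<Sum>i\<in>UNIV. \<Sum>j\<in>UNIV. H i j * (\<Sum>k\<in>UNIV. \<Sum>l\<in>UNIV. T k j l * Gam l i k))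
      = (\<Sum>j\<in>UNIV. \<Sum>i\<in>UNIV. H i j * (\<Sum>k\<in>UNIV. \<Sum>l\<in>UNIV. T k j l * Gam l i k))"
    by (rule sum.swap)
  also have "\<dots> = (\<Sum>i\<in>UNIV. \<Sum>j\<in>UNIV. H i j * (\<Sum>k\<in>UNIV. \<Sum>l\<in>UNIV. Gam k j l * T l i k))"
  proof -
    have key: "H b a * (\<Sum>k\<in>UNIV. \<Sum>l\<in>UNIV. T k a l * Gam l b k) = H a b * (\<Sum>k\<in>UNIV. \<Sum>l\<in>UNIV. Gam k b l * T l a k)" for a b
    proof -
      have "(\<Sum>k\<in>UNIV. \<Sum>l\<in>UNIV. T k a l * Gam l b k) = (\<Sum>k\<in>UNIV. \<Sum>l\<in>UNIV. Gam k b l * T l a k)"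
        by (subst sum.swap) (simp add: mult.commute)
      then show ?thesis by (simp add: H_sym[of b a])
    qed
    show ?thesis by (intro sum.cong refl) (rule key)
  qed
  finally show ?thesis using contr_Gam_kjl_T_lik by simp
qed

lemma sum_T_kjl_T_lik: "(\<Sum>k\<in>UNIV. \<Sum>l\<in>UNIV. T k j l * T l i k) = (real CARD('n) + 2) * w i * w j - 2 * G i j * w_sq"
proof -
  define a :: "'n \<Rightarrow> 'n \<Rightarrow> real" where "a k l = G j l * W k" for k l
  define b :: "'n \<Rightarrow> 'n \<Rightarrow> real" where "b k l = (if k = l then w j else 0)" for k l
  define c :: "'n \<Rightarrow> 'n \<Rightarrow> real" where "c k l = (if k = j then w l else 0)" for k l
  define d :: "'n \<Rightarrow> 'n \<Rightarrow> real" where "d k l = G i k * W l" for k l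
  define e :: "'n \<Rightarrow> 'n \<Rightarrow> real" where "e k l = (if l = k then w i else 0)" for k l
  define f :: "'n \<Rightarrow> 'n \<Rightarrow> real" where "f k l = (if l = i then w k else 0)" for k l
  have TkT: "T k j l * T l i k = a k l * d k l - a k l * e k l - a k l * f k l - b k l * d k l + b k l * e k l + b k l * f k l
      - c k l * d k l + c k l * e k l + c k l * f k l" for k l
    unfolding a_def b_def c_def d_def e_def f_def T_eq by (simp add: algebra_simps)
  have s1: "(\<Sum>k\<in>UNIV. \<Sum>l\<in>UNIV. a k l * d k l) = w i * w j"
  proof -
    have "(\<Sum>k\<in>UNIV. \<Sum>l\<in>UNIV. a k l * d k l) = (\<Sum>k\<in>UNIV. G i k * W k) * (\<Sum>l\<in>UNIV. G j l * W l)"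
      unfolding a_def d_def by (simp add: sum_distrib_left sum_distrib_right mult_ac) (subst sum.swap, simp add: mult_ac)
    then show ?thesis by (simp add: sum_G_W)
  qed
  have s2: "(\<Sum>k\<in>UNIV. \<Sum>l\<in>UNIV. a k l * e k l) = w i * w j"
    unfolding a_def e_def by (simp add: sum_G_W sum_distrib_right[symmetric] mult.assoc[symmetric])
  have s3: "(\<Sum>k\<in>UNIV. \<Sum>l\<in>UNIV. a k l * f k l) = G i j * w_sq"
    unfolding a_def f_def w_sq_def by (simp add: sum_distrib_left G_sym mult_ac)
  have s4: "(\<Sum>k\<in>UNIV. \<Sum>l\<in>UNIV. b k l * d k l) = w i * w j"
    unfolding b_def d_def by (simp add: sum_G_W sum_distrib_left[symmetric] mult_ac)
  have s5: "(\<Sum>k\<in>UNIV. \<Sum>l\<in>UNIV. b k l * e k l) = real CARD('n) * w i * w j"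
    unfolding b_def e_def by simp
  have s6: "(\<Sum>k\<in>UNIV. \<Sum>l\<in>UNIV. b k l * f k l) = w i * w j"
    unfolding b_def f_def by (simp add: mult.commute)
  have s7: "(\<Sum>k\<in>UNIV. \<Sum>l\<in>UNIV. c k l * d k l) = G i j * w_sq"
    unfolding c_def d_def w_sq_def by (simp add: sum_distrib_left mult_ac)
  have s8: "(\<Sum>k\<in>UNIV. \<Sum>l\<in>UNIV. c k l * e k l) = w i * w j"
    unfolding c_def e_def by (simp add: mult.commute)
  have s9: "(\<Sum>k\<in>UNIV. \<Sum>l\<in>UNIV. c k l * f k l) = w i * w j"
    unfolding c_def f_def by (simp add: mult.commute)
  have "(\<Sum>k\<in>UNIV. \<Sum>l\<in>UNIV. T k j l * T l i k) =
     (\<Sum>k\<in>UNIV. \<Sum>l\<in>UNIV. a k l * d k l) - (\<Sum>k\<in>UNIV. \<Sum>l\<in>UNIV. a k l * e k l)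
   - (\<Sum>k\<in>UNIV. \<Sum>l\<in>UNIV. a k l * f k l) - (\<Sum>k\<in>UNIV. \<Sum>l\<in>UNIV. b k l * d k l)
   + (\<Sum>k\<in>UNIV. \<Sum>l\<in>UNIV. b k l * e k l) + (\<Sum>k\<in>UNIV. \<Sum>l\<in>UNIV. b k l * f k l)
   - (\<Sum>k\<in>UNIV. \<Sum>l\<in>UNIV. c k l * d k l) + (\<Sum>k\<in>UNIV. \<Sum>l\<in>UNIV. c k l * e k l)
   + (\<Sum>k\<in>UNIV. \<Sum>l\<in>UNIV. c k l * f k l)"
    unfolding TkT by (simp only: sum.distrib sum_subtractf)
  also have "\<dots> = (real CARD('n) + 2) * w i * w j - 2 * G i j * w_sq"
    unfolding s1 s2 s3 s4 s5 s6 s7 s8 s9 by (simp add: algebra_simps)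
  finally show ?thesis .
qed

lemma contr_T_kjl_T_lik: "(\<Sum>i\<in>UNIV. \<Sum>j\<in>UNIV. H i j * (\<Sum>k\<in>UNIV. \<Sum>l\<in>UNIV. T k j l * T l i k))
   = (2 - real CARD('n)) * w_sq"
proof -
  have hw: "(\<Sum>i\<in>UNIV. \<Sum>j\<in>UNIV. H i j * (w i * w j)) = w_sq"
    unfolding w_sq_def W_def by (simp add: sum_distrib_left mult_ac)
  have "(\<Sum>i\<in>UNIV. \<Sum>j\<in>UNIV. H i j * (\<Sum>k\<in>UNIV. \<Sum>l\<in>UNIV. T k j l * T l i k))
     = (\<Sum>i\<in>UNIV. \<Sum>j\<in>UNIV. (real CARD('n) + 2) * (H i j * (w i * w j)) - 2 * w_sq * (H i j * G i j))"
    unfolding sum_T_kjl_T_lik by (intro sum.cong refl) (simp add: algebra_simps)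
  also have "\<dots> = (real CARD('n) + 2) * w_sq - 2 * w_sq * real CARD('n)"
    by (simp add: sum_subtractf sum_distrib_left[symmetric] hw trace_H_G)
  finally show ?thesis by (simp add: algebra_simps)
qed

lemma tr_Gam_w_eq: "tr_Gam_w = div_dG_W - tr_dG_W / 2"
proof -
  have "tr_Gam_w = (1/2) * (\<Sum>i\<in>UNIV. \<Sum>j\<in>UNIV. \<Sum>a\<in>UNIV. H i j * (dG i j a + dG j i a - dG a i j) * W a)"
  proof -
    have "tr_Gam_w = (\<Sum>i\<in>UNIV. \<Sum>j\<in>UNIV. \<Sum>l\<in>UNIV. H i j * Gam l i j * w l)"
      unfolding tr_Gam_w_def by (rule sum_rotate3[symmetric])
    also have "\<dots> = (\<Sum>i\<in>UNIV. \<Sum>j\<in>UNIV. \<Sum>l\<in>UNIV. \<Sum>a\<in>UNIV. (1/2) * (H i j * (dG i j a + dG j i a - dG a i j)) * (H l a * w l))"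
      unfolding Gam_def by (simp add: sum_distrib_left sum_distrib_right mult_ac)
    also have "\<dots> = (\<Sum>i\<in>UNIV. \<Sum>j\<in>UNIV. \<Sum>a\<in>UNIV. (1/2) * (H i j * (dG i j a + dG j i a - dG a i j)) * W a)"
    proof -
      have inner: "(\<Sum>l\<in>UNIV. X * (H l a * w l)) = X * W a" for X a
        by (simp add: sum_distrib_left[symmetric] sum_H_w)
      have **: "(\<Sum>l\<in>UNIV. \<Sum>a\<in>UNIV. (1/2) * (H i j * (dG i j a + dG j i a - dG a i j)) * (H l a * w l))
          = (\<Sum>a\<in>UNIV. (1/2) * (H i j * (dG i j a + dG j i a - dG a i j)) * W a)" for i j
        by (subst sum.swap) (rule sum.cong[OF refl], rule inner)
      show ?thesis by (rule sum.cong[OF refl], rule sum.cong[OF refl], rule **)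
    qed
    finally show ?thesis by (simp add: sum_distrib_left mult_ac)
  qed
  moreover have "(\<Sum>i\<in>UNIV. \<Sum>j\<in>UNIV. \<Sum>a\<in>UNIV. H i j * dG i j a * W a) = div_dG_W"
    unfolding div_dG_W_def ..
  moreover have "(\<Sum>i\<in>UNIV. \<Sum>j\<in>UNIV. \<Sum>a\<in>UNIV. H i j * dG j i a * W a) = div_dG_W"
    unfolding div_dG_W_def by (subst sum.swap) (simp add: H_sym)
  moreover have "(\<Sum>i\<in>UNIV. \<Sum>j\<in>UNIV. \<Sum>a\<in>UNIV. H i j * dG a i j * W a) = tr_dG_W"
    unfolding tr_dG_W_def ..
  ultimately show ?thesis
    by (simp add: distrib_left right_diff_distrib distrib_right left_diff_distrib sum.distrib sum_subtractf mult_ac)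
qed

lemma contr_Dric: "(\<Sum>i\<in>UNIV. \<Sum>j\<in>UNIV. H i j * Dric i j)
   = 2 * (real CARD('n) - 1) * (tr_dw - tr_Gam_w) - (real CARD('n) - 1) * (real CARD('n) - 2) * w_sq"
proof -
  define A1 where "A1 i j = (\<Sum>k\<in>UNIV. dT k k i j)" for i j
  define A2 where "A2 i j = (\<Sum>k\<in>UNIV. dT j k i k)" for i j
  define A3 where "A3 i j = (\<Sum>k\<in>UNIV. \<Sum>l\<in>UNIV. Gam k k l * T l i j)" for i j
  define A4 where "A4 i j = (\<Sum>k\<in>UNIV. \<Sum>l\<in>UNIV. T k k l * Gam l i j)" for i j
  define A5 where "A5 i j = (\<Sum>k\<in>UNIV. \<Sum>l\<in>UNIV. T k k l * T l i j)" for i j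
  define A6 where "A6 i j = (\<Sum>k\<in>UNIV. \<Sum>l\<in>UNIV. Gam k j l * T l i k)" for i j
  define A7 where "A7 i j = (\<Sum>k\<in>UNIV. \<Sum>l\<in>UNIV. T k j l * Gam l i k)" for i j
  define A8 where "A8 i j = (\<Sum>k\<in>UNIV. \<Sum>l\<in>UNIV. T k j l * T l i k)" for i j
  have D: "H i j * Dric i j = H i j * A1 i j - H i j * A2 i j + H i j * A3 i j + H i j * A4 i j + H i j * A5 i j
      - H i j * A6 i j - H i j * A7 i j - H i j * A8 i j" for i j
  proof -
    have "Dric i j = A1 i j - A2 i j + A3 i j + A4 i j + A5 i j - A6 i j - A7 i j - A8 i j"
      unfolding Dric_def A1_def A2_def A3_def A4_def A5_def A6_def A7_def A8_def
      by (simp add: sum.distrib sum_subtractf)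
    then show ?thesis by (simp only: right_diff_distrib distrib_left)
  qed
  have "(\<Sum>i\<in>UNIV. \<Sum>j\<in>UNIV. H i j * Dric i j) =
     (\<Sum>i\<in>UNIV. \<Sum>j\<in>UNIV. H i j * A1 i j) - (\<Sum>i\<in>UNIV. \<Sum>j\<in>UNIV. H i j * A2 i j)
   + (\<Sum>i\<in>UNIV. \<Sum>j\<in>UNIV. H i j * A3 i j) + (\<Sum>i\<in>UNIV. \<Sum>j\<in>UNIV. H i j * A4 i j)
   + (\<Sum>i\<in>UNIV. \<Sum>j\<in>UNIV. H i j * A5 i j) - (\<Sum>i\<in>UNIV. \<Sum>j\<in>UNIV. H i j * A6 i j)
   - (\<Sum>i\<in>UNIV. \<Sum>j\<in>UNIV. H i j * A7 i j) - (\<Sum>i\<in>UNIV. \<Sum>j\<in>UNIV. H i j * A8 i j)"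
    unfolding D by (simp only: sum.distrib sum_subtractf)
  also have "\<dots> = ((real CARD('n) - 2) * tr_dw + tr_dG_W - real CARD('n) * div_dG_W) - (- real CARD('n) * tr_dw)
     + (real CARD('n) - 2) * tr_dG_W / 2 + (- real CARD('n) * tr_Gam_w) + (- real CARD('n) * (real CARD('n) - 2) * w_sq)
     - (- tr_Gam_w) - (- tr_Gam_w) - (2 - real CARD('n)) * w_sq"
    unfolding A1_def A2_def A3_def A4_def A5_def A6_def A7_def A8_def
    by (simp only: contr_dT_kkij contr_dT_jkik contr_Gam_kkl_T_lij contr_T_kkl_Gam_lij contr_T_kkl_T_lij contr_Gam_kjl_T_lik contr_T_kjl_Gam_lik contr_T_kjl_T_lik)
  also have "\<dots> = 2 * (real CARD('n) - 1) * (tr_dw - tr_Gam_w) - (real CARD('n) - 1) * (real CARD('n) - 2) * w_sq"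
    unfolding tr_Gam_w_eq by (simp add: algebra_simps add_divide_distrib diff_divide_distrib)
  finally show ?thesis .
qed

end

section \<open>Conformal change of the weighted scalar curvature\<close>

text \<open>Here \<open>R, Lu, Lv, A, B, C\<close> stand for \<open>scal g\<close>, \<open>\<Delta>u\<close>, \<open>\<Delta>v\<close>, \<open>|\<nabla>u|\<^sup>2\<close>, \<open>|\<nabla>v|\<^sup>2\<close>,
  \<open>\<langle>\<nabla>u, \<nabla>v\<rangle>\<close>; the left-hand side is the weighted scalar curvature of \<open>(u\<^sup>-\<^sup>2 g, v / u)\<close>
  written out via the transformation laws of its ingredients.\<close>
lemma weighted_scalar_rescaling_identity:
  fixes u v R Lu Lv A B C m \<mu> n :: real
  assumes ux: "u \<noteq> 0" and vx: "v \<noteq> 0"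
  shows "(u\<^sup>2 * R + 2 * (n - 1) * u * Lu - n * (n - 1) * A)
      - 2 * m / (v / u) * (u\<^sup>2 * (Lv / u - 2 * C / u\<^sup>2 - v * Lu / u\<^sup>2 + 2 * v * A / u^3)
        - (n - 2) * u * (C / u - v * A / u\<^sup>2))
      - m * (m - 1) / (v / u)\<^sup>2 * (u\<^sup>2 * (B / u\<^sup>2 - 2 * v * C / u^3 + v\<^sup>2 * A / u^4))
      + m * \<mu> / (v / u)\<^sup>2
    = u\<^sup>2 * (R - 2 * m / v * Lv - m * (m - 1) / v\<^sup>2 * B + m * \<mu> / v\<^sup>2)
      + 2 * (m + n - 1) * u * (Lu + m / v * C) - (m + n) * (m + n - 1) * A"
proof -
  have laplacian_terms: "2 * m / (v / u) * (u\<^sup>2 * (Lv / u - 2 * C / u\<^sup>2 - v * Lu / u\<^sup>2 + 2 * v * A / u^3)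
      - (n - 2) * u * (C / u - v * A / u\<^sup>2))
      = 2 * m * (u\<^sup>2 * Lv / v) - 2 * m * n * (u * C / v) - 2 * m * u * Lu + 2 * m * n * A"
    using ux vx by (simp add: field_simps eval_nat_numeral)
  have gradient_terms: "m * (m - 1) / (v / u)\<^sup>2 * (u\<^sup>2 * (B / u\<^sup>2 - 2 * v * C / u^3 + v\<^sup>2 * A / u^4))
      = m * (m - 1) * (u\<^sup>2 * B / v\<^sup>2) - 2 * m * (m - 1) * (u * C / v) + m * (m - 1) * A"
    using ux vx by (simp add: field_simps eval_nat_numeral)
  have "m * \<mu> / (v / u)\<^sup>2 = m * \<mu> * (u\<^sup>2 / v\<^sup>2)"
    using ux vx by (simp add: field_simps)
  moreover have "u\<^sup>2 * (R - 2 * m / v * Lv - m * (m - 1) / v\<^sup>2 * B + m * \<mu> / v\<^sup>2)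
      = u\<^sup>2 * R - 2 * m * (u\<^sup>2 * Lv / v) - m * (m - 1) * (u\<^sup>2 * B / v\<^sup>2) + m * \<mu> * (u\<^sup>2 / v\<^sup>2)"
    by (simp add: algebra_simps)
  moreover have "2 * (m + n - 1) * u * (Lu + m / v * C) = 2 * (m + n - 1) * u * Lu + 2 * (m + n - 1) * m * (u * C / v)"
    by (simp add: algebra_simps)
  ultimately show ?thesis
    unfolding laplacian_terms gradient_terms by (simp add: algebra_simps)
qed


locale conformal_rescaling =
  fixes U :: "(real^'n::finite) set" and g :: "'n metric" and u :: "real^'n \<Rightarrow> real"
  assumes U_open: "open U" and g_metric: "riem_metric U g" and u_smooth: "smooth_fun U u" and u_pos: "\<forall>y\<in>U. u y > 0"
begin

abbreviation "gh \<equiv> conf_metric u g"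

lemma conf_metric_entry: "gh y $ i $ j = g y $ i $ j / (u y * u y)"
  by (simp add: conf_metric_def power2_eq_square)

lemma ginv_conf_metric: assumes y: "y \<in> U" shows "ginv gh y = (u y)\<^sup>2 *\<^sub>R ginv g y"
proof -
  have u_nonzero: "u y \<noteq> 0" using u_pos y by auto
  have inv: "invertible (gh y)"
    unfolding conf_metric_def using scalar_invertible[OF _ riem_metric_invertible[OF g_metric y]] u_nonzero by simp
  have "gh y ** ((u y)\<^sup>2 *\<^sub>R ginv g y) = mat 1"
    unfolding conf_metric_def
    by (simp add: matrix_scalar_ac scalar_matrix_assoc[symmetric] ginv_inverse(2)[OF g_metric y] u_nonzero)
  then show ?thesis unfolding ginv_def by (rule matrix_inv_unique[OF inv])
qed

lemma ginv_conf_metric_entry: "y \<in> U \<Longrightarrow> ginv gh y $ i $ j = (u y)\<^sup>2 * ginv g y $ i $ j"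
  by (simp add: ginv_conf_metric)

lemma g_smooth: "smooth_fun U (\<lambda>y. g y $ i $ j)"
  by (rule riem_metric_smooth[OF g_metric])

lemma ginv_smooth: "smooth_fun U (\<lambda>y. ginv g y $ i $ j)"
  by (rule smooth_fun_ginv[OF U_open g_metric])

lemma u_nonzero: "y \<in> U \<Longrightarrow> u y \<noteq> 0"
  using u_pos by auto

lemma pd_conf_metric:
  assumes y: "y \<in> U"
  shows "pd k (\<lambda>y. gh y $ i $ j) y = pd k (\<lambda>y. g y $ i $ j) y / (u y)\<^sup>2 - 2 * pd k u y * g y $ i $ j / (u y)^3"
proof -
  note du = smooth_fun_partial_differentiable[OF u_smooth y]
  note dg = smooth_fun_partial_differentiable[OF g_smooth y]
  have "pd k (\<lambda>y. gh y $ i $ j) y = pd k (\<lambda>y. g y $ i $ j / (u y * u y)) y"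
    by (simp add: conf_metric_entry)
  also have "\<dots> = pd k (\<lambda>y. g y $ i $ j) y / (u y)\<^sup>2 - 2 * pd k u y * g y $ i $ j / (u y)^3"
    using pd_divide[OF dg partial_differentiable_mult[OF du du]] pd_mult[OF du du] u_nonzero[OF y]
    by (simp add: field_simps power2_eq_square power3_eq_cube)
  finally show ?thesis .
qed

definition "dlog_u i y = pd i u y / u y"
definition "dlog_u_up k y = (\<Sum>l\<in>UNIV. ginv g y $ k $ l * dlog_u l y)"
definition "chr_diff k i j y = - ((if k = j then dlog_u i y else 0) + (if k = i then dlog_u j y else 0) - g y $ i $ j * dlog_u_up k y)"

lemma chr_conf_metric: assumes y: "y \<in> U" shows "chr gh k i j y = chr g k i j y + chr_diff k i j y"
proof -
  have uy: "u y \<noteq> 0" by (rule u_nonzero[OF y])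
  have per: "ginv gh y $ k $ l * (pd i (\<lambda>y. gh y $ j $ l) y + pd j (\<lambda>y. gh y $ i $ l) y - pd l (\<lambda>y. gh y $ i $ j) y)
    = ginv g y $ k $ l * (pd i (\<lambda>y. g y $ j $ l) y + pd j (\<lambda>y. g y $ i $ l) y - pd l (\<lambda>y. g y $ i $ j) y)
      - 2 * (ginv g y $ k $ l * g y $ l $ j) * dlog_u i y - 2 * (ginv g y $ k $ l * g y $ l $ i) * dlog_u j y
      + 2 * g y $ i $ j * (ginv g y $ k $ l * dlog_u l y)" for l
    unfolding ginv_conf_metric_entry[OF y] pd_conf_metric[OF y] dlog_u_def using uy
    by (simp add: riem_metric_sym[OF g_metric y, of j l] riem_metric_sym[OF g_metric y, of i l] field_simps power2_eq_square power3_eq_cube)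
  have "chr gh k i j y = (1/2) * (\<Sum>l\<in>UNIV. ginv g y $ k $ l * (pd i (\<lambda>y. g y $ j $ l) y + pd j (\<lambda>y. g y $ i $ l) y - pd l (\<lambda>y. g y $ i $ j) y))
      - (\<Sum>l\<in>UNIV. ginv g y $ k $ l * g y $ l $ j) * dlog_u i y - (\<Sum>l\<in>UNIV. ginv g y $ k $ l * g y $ l $ i) * dlog_u j y
      + g y $ i $ j * (\<Sum>l\<in>UNIV. ginv g y $ k $ l * dlog_u l y)"
    unfolding chr_def per by (simp add: sum.distrib sum_subtractf sum_distrib_left sum_distrib_right algebra_simps)
  also have "\<dots> = chr g k i j y + chr_diff k i j y"
    unfolding sum_ginv_metric[OF g_metric y] by (simp add: chr_def chr_diff_def dlog_u_up_def)
  finally show ?thesis .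
qed

lemma smooth_dlog_u: "smooth_fun U (dlog_u i)"
  unfolding dlog_u_def[abs_def] by (rule smooth_fun_divide[OF U_open _ smooth_fun_pd[OF u_smooth] u_smooth]) (use u_nonzero in blast)

lemma smooth_dlog_u_up: "smooth_fun U (dlog_u_up k)"
  unfolding dlog_u_up_def[abs_def]
  by (rule smooth_fun_sum[OF U_open]) (auto intro: smooth_fun_mult[OF U_open ginv_smooth smooth_dlog_u])

lemma smooth_chr_diff: "smooth_fun U (chr_diff k i j)"
proof -
  have "smooth_fun U (\<lambda>y. (if k = j then dlog_u i y else 0) + (if k = i then dlog_u j y else 0) - g y $ i $ j * dlog_u_up k y)"
    by (rule smooth_fun_diff[OF U_open smooth_fun_add[OF U_open smooth_fun_if_zero[OF smooth_dlog_u] smooth_fun_if_zero[OF smooth_dlog_u]] smooth_fun_mult[OF U_open g_smooth smooth_dlog_u_up]])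
  then show ?thesis unfolding chr_diff_def[abs_def] by (rule smooth_fun_minus[OF U_open])
qed

lemma smooth_chr: "smooth_fun U (chr g k i j)"
proof -
  have "smooth_fun U (\<lambda>y. \<Sum>l\<in>UNIV. ginv g y $ k $ l *
      (pd i (\<lambda>y. g y $ j $ l) y + pd j (\<lambda>y. g y $ i $ l) y - pd l (\<lambda>y. g y $ i $ j) y))"
    by (rule smooth_fun_sum[OF U_open])
       (auto intro!: smooth_fun_mult[OF U_open ginv_smooth] smooth_fun_diff[OF U_open] smooth_fun_add[OF U_open] smooth_fun_pd[OF g_smooth])
  then show ?thesis unfolding chr_def[abs_def] by (rule smooth_fun_mult[OF U_open smooth_fun_const])
qed

lemma pd_dlog_u_up: assumes x: "x \<in> U"
  shows "pd k' (dlog_u_up k) x = (\<Sum>l\<in>UNIV. pd k' (\<lambda>y. ginv g y $ k $ l) x * dlog_u l x + ginv g x $ k $ l * pd k' (dlog_u l) x)"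
  unfolding dlog_u_up_def[abs_def]
  by (rule pd_sum_mult) (auto intro: smooth_fun_partial_differentiable[OF ginv_smooth x] smooth_fun_partial_differentiable[OF smooth_dlog_u x])

lemma pd_chr_diff:
  assumes x: "x \<in> U"
  shows "pd k' (chr_diff k i j) x = - ((if k = j then pd k' (dlog_u i) x else 0) + (if k = i then pd k' (dlog_u j) x else 0)
      - (pd k' (\<lambda>y. g y $ i $ j) x * dlog_u_up k x + g x $ i $ j * pd k' (dlog_u_up k) x))"
  unfolding chr_diff_def[abs_def]
  using smooth_fun_partial_differentiable[OF smooth_dlog_u x] smooth_fun_partial_differentiable[OF smooth_dlog_u_up x]
    smooth_fun_partial_differentiable[OF g_smooth x]
  by (simp add: pd_minus pd_diff pd_add pd_mult pd_if_const pd_const partial_differentiable_const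
      partial_differentiable_if_const partial_differentiable_add partial_differentiable_mult)

lemma pd_chr_conf_metric: assumes x: "x \<in> U"
  shows "pd k' (chr gh k i j) x = pd k' (chr g k i j) x + pd k' (chr_diff k i j) x"
proof -
  have "pd k' (chr gh k i j) x = pd k' (\<lambda>y. chr g k i j y + chr_diff k i j y) x"
    by (rule pd_cong_open(1)[OF U_open x]) (simp add: chr_conf_metric)
  also have "\<dots> = pd k' (chr g k i j) x + pd k' (chr_diff k i j) x"
    using pd_add[OF smooth_fun_partial_differentiable[OF smooth_chr x] smooth_fun_partial_differentiable[OF smooth_chr_diff x]] by simp
  finally show ?thesis .
qed

lemma pd_metric_sym: assumes x: "x \<in> U" shows "pd k (\<lambda>y. g y $ i $ j) x = pd k (\<lambda>y. g y $ j $ i) x"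
  by (rule pd_cong_open(1)[OF U_open x]) (simp add: riem_metric_sym[OF g_metric])

lemma christoffel_variation_at: assumes x: "x \<in> U"
  shows "christoffel_variation (\<lambda>i j. g x $ i $ j) (\<lambda>i j. ginv g x $ i $ j) (\<lambda>k i j. pd k (\<lambda>y. g y $ i $ j) x)"
proof
  show "(\<Sum>l\<in>UNIV. ginv g x $ i $ l * g x $ l $ j) = (if i = j then 1 else 0)" for i j by (rule sum_ginv_metric[OF g_metric x])
  show "(\<Sum>l\<in>UNIV. g x $ i $ l * ginv g x $ l $ j) = (if i = j then 1 else 0)" for i j by (rule sum_metric_ginv[OF g_metric x])
  show "g x $ i $ j = g x $ j $ i" for i j by (rule riem_metric_sym[OF g_metric x])
  show "ginv g x $ i $ j = ginv g x $ j $ i" for i j by (rule ginv_sym[OF g_metric x])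
  show "pd k (\<lambda>y. g y $ i $ j) x = pd k (\<lambda>y. g y $ j $ i) x" for k i j by (rule pd_metric_sym[OF x])
qed

lemma pd_dlog_u:
  assumes x: "x \<in> U"
  shows "pd i (dlog_u j) x = pd i (pd j u) x / u x - pd j u x * pd i u x / (u x)\<^sup>2"
  unfolding dlog_u_def[abs_def]
  by (rule pd_divide[OF smooth_fun_partial_differentiable[OF smooth_fun_pd[OF u_smooth] x]
        smooth_fun_partial_differentiable[OF u_smooth x] u_nonzero[OF x]])

lemma ric_conf_metric: assumes x: "x \<in> U"
  shows "ric gh i j x = ric g i j x +
    christoffel_variation.Dric (\<lambda>i j. g x $ i $ j) (\<lambda>i j. ginv g x $ i $ j) (\<lambda>k i j. pd k (\<lambda>y. g y $ i $ j) x)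
     (\<lambda>i. dlog_u i x) (\<lambda>k i. pd k (dlog_u i) x) i j"
proof -
  interpret A: christoffel_variation "\<lambda>i j. g x $ i $ j" "\<lambda>i j. ginv g x $ i $ j" "\<lambda>k i j. pd k (\<lambda>y. g y $ i $ j) x"
    "\<lambda>i. dlog_u i x" "\<lambda>k i. pd k (dlog_u i) x"
    by (rule christoffel_variation_at[OF x])
  have Gam: "A.Gam k i j = chr g k i j x" for k i j by (simp add: A.Gam_def chr_def)
  have W: "A.W k = dlog_u_up k x" for k by (simp add: A.W_def dlog_u_up_def)
  have T: "A.T k i j = chr_diff k i j x" for k i j by (simp add: A.T_def chr_diff_def W)
  have dT: "A.dT k' k i j = pd k' (chr_diff k i j) x" for k' k i j
    by (simp add: A.dT_def A.dW_def A.dH_def pd_chr_diff[OF x] pd_dlog_u_up[OF x] pd_ginv[OF U_open g_metric x] W)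
  have chrx: "chr gh k i j x = A.Gam k i j + A.T k i j" for k i j using chr_conf_metric[OF x] T Gam by simp
  have pdc: "pd k' (chr gh k i j) x = pd k' (chr g k i j) x + A.dT k' k i j" for k' k i j
    using pd_chr_conf_metric[OF x] dT by simp
  show ?thesis
    unfolding ric_def A.Dric_def chrx pdc Gam[symmetric]
    by (simp add: sum.distrib sum_subtractf algebra_simps)
qed

lemma scal_conf_metric: assumes x: "x \<in> U"
  shows "scal gh x = (u x)\<^sup>2 * scal g x + 2 * (real CARD('n) - 1) * u x * lap g u x
     - real CARD('n) * (real CARD('n) - 1) * coinner g x (grad u x) (grad u x)"
proof -
  interpret A: christoffel_variation "\<lambda>i j. g x $ i $ j" "\<lambda>i j. ginv g x $ i $ j" "\<lambda>k i j. pd k (\<lambda>y. g y $ i $ j) x"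
    "\<lambda>i. dlog_u i x" "\<lambda>k i. pd k (dlog_u i) x"
    by (rule christoffel_variation_at[OF x])
  have Gam: "A.Gam k i j = chr g k i j x" for k i j by (simp add: A.Gam_def chr_def)
  have ux: "u x \<noteq> 0" by (rule u_nonzero[OF x])
  define Acu where "Acu = coinner g x (grad u x) (grad u x)"
  define P where "P = (\<Sum>i\<in>UNIV. \<Sum>j\<in>UNIV. ginv g x $ i $ j * pd i (pd j u) x)"
  define Q where "Q = (\<Sum>i\<in>UNIV. \<Sum>j\<in>UNIV. ginv g x $ i $ j * (\<Sum>k\<in>UNIV. chr g k i j x * pd k u x))"
  have Acu: "Acu = (\<Sum>i\<in>UNIV. \<Sum>j\<in>UNIV. ginv g x $ i $ j * pd i u x * pd j u x)"
    unfolding Acu_def coinner_def grad_def by simp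
  have lap: "lap g u x = P - Q"
    unfolding lap_def P_def Q_def by (simp add: right_diff_distrib sum_subtractf)
  have SH: "A.tr_dw = P / u x - Acu / (u x)\<^sup>2"
  proof -
    have "A.tr_dw = (\<Sum>i\<in>UNIV. \<Sum>j\<in>UNIV. ginv g x $ i $ j * pd i (pd j u) x / u x
        - ginv g x $ i $ j * pd i u x * pd j u x / (u x)\<^sup>2)"
      unfolding A.tr_dw_def by (simp add: pd_dlog_u[OF x] algebra_simps)
    then show ?thesis unfolding P_def Acu by (simp add: sum_subtractf sum_divide_distrib)
  qed
  have tr_Gam_w: "A.tr_Gam_w = Q / u x"
  proof -
    have "A.tr_Gam_w = (\<Sum>i\<in>UNIV. \<Sum>j\<in>UNIV. \<Sum>l\<in>UNIV. ginv g x $ i $ j * chr g l i j x * dlog_u l x)"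
      unfolding A.tr_Gam_w_def Gam by (rule sum_rotate3[symmetric])
    then show ?thesis unfolding Q_def by (simp add: dlog_u_def sum_divide_distrib sum_distrib_left mult_ac)
  qed
  have w_sq: "A.w_sq = Acu / (u x)\<^sup>2"
    unfolding A.w_sq_def A.W_def Acu
    by (simp add: dlog_u_def sum_distrib_left sum_divide_distrib power2_eq_square mult_ac)
  have "scal gh x = (\<Sum>i\<in>UNIV. \<Sum>j\<in>UNIV. (u x)\<^sup>2 * (ginv g x $ i $ j * ric g i j x)
      + (u x)\<^sup>2 * (ginv g x $ i $ j * A.Dric i j))"
    unfolding scal_def ginv_conf_metric_entry[OF x] ric_conf_metric[OF x] by (simp add: algebra_simps)
  also have "\<dots> = (u x)\<^sup>2 * scal g x + (u x)\<^sup>2 * (\<Sum>i\<in>UNIV. \<Sum>j\<in>UNIV. ginv g x $ i $ j * A.Dric i j)"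
    unfolding scal_def by (simp add: sum.distrib sum_distrib_left)
  also have "\<dots> = (u x)\<^sup>2 * scal g x + (u x)\<^sup>2 * (2 * (real CARD('n) - 1) * (P / u x - Acu / (u x)\<^sup>2 - Q / u x)
       - (real CARD('n) - 1) * (real CARD('n) - 2) * (Acu / (u x)\<^sup>2))"
    unfolding A.contr_Dric SH tr_Gam_w w_sq ..
  also have "\<dots> = (u x)\<^sup>2 * scal g x + 2 * (real CARD('n) - 1) * u x * (P - Q)
     - real CARD('n) * (real CARD('n) - 1) * Acu"
    using ux by (simp add: field_simps power2_eq_square)
  finally show ?thesis unfolding lap Acu_def .
qed

lemma coinner_conf_metric: "x \<in> U \<Longrightarrow> coinner gh x a b = (u x)\<^sup>2 * coinner g x a b"
  unfolding coinner_def by (simp add: ginv_conf_metric_entry sum_distrib_left mult_ac)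

lemma lap_conf_metric: assumes x: "x \<in> U"
  shows "lap gh f x = (u x)\<^sup>2 * lap g f x - (real CARD('n) - 2) * u x * coinner g x (grad u x) (grad f x)"
proof -
  interpret A: christoffel_variation "\<lambda>i j. g x $ i $ j" "\<lambda>i j. ginv g x $ i $ j" "\<lambda>k i j. pd k (\<lambda>y. g y $ i $ j) x"
    "\<lambda>i. dlog_u i x" "\<lambda>k i. pd k (dlog_u i) x"
    by (rule christoffel_variation_at[OF x])
  have Gam: "A.Gam k i j = chr g k i j x" for k i j by (simp add: A.Gam_def chr_def)
  have W: "A.W k = dlog_u_up k x" for k by (simp add: A.W_def dlog_u_up_def)
  have T: "A.T k i j = chr_diff k i j x" for k i j by (simp add: A.T_def chr_diff_def W)
  have chrx: "chr gh k i j x = chr g k i j x + A.T k i j" for k i j using chr_conf_metric[OF x] T by simp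
  have ux: "u x \<noteq> 0" by (rule u_nonzero[OF x])
  define E where "E = (\<Sum>i\<in>UNIV. \<Sum>j\<in>UNIV. ginv g x $ i $ j * (\<Sum>k\<in>UNIV. A.T k i j * pd k f x))"
  have E: "E = (real CARD('n) - 2) * (\<Sum>k\<in>UNIV. A.W k * pd k f x)"
  proof -
    have "E = (\<Sum>i\<in>UNIV. \<Sum>j\<in>UNIV. \<Sum>k\<in>UNIV. ginv g x $ i $ j * A.T k i j * pd k f x)"
      unfolding E_def by (simp add: sum_distrib_left mult_ac)
    also have "\<dots> = (\<Sum>k\<in>UNIV. \<Sum>i\<in>UNIV. \<Sum>j\<in>UNIV. ginv g x $ i $ j * A.T k i j * pd k f x)"
      by (rule sum_rotate3)
    also have "\<dots> = (\<Sum>k\<in>UNIV. (real CARD('n) - 2) * A.W k * pd k f x)"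
      by (simp add: sum_distrib_right[symmetric] A.contr_H_T)
    finally show ?thesis by (simp add: sum_distrib_left mult_ac)
  qed
  have cw: "(\<Sum>k\<in>UNIV. A.W k * pd k f x) = coinner g x (grad u x) (grad f x) / u x"
  proof -
    have "(\<Sum>k\<in>UNIV. A.W k * pd k f x) = (\<Sum>k\<in>UNIV. \<Sum>l\<in>UNIV. ginv g x $ k $ l * pd l u x * pd k f x) / u x"
      unfolding A.W_def by (simp add: dlog_u_def sum_distrib_left sum_distrib_right sum_divide_distrib mult_ac)
    also have "(\<Sum>k\<in>UNIV. \<Sum>l\<in>UNIV. ginv g x $ k $ l * pd l u x * pd k f x)
       = (\<Sum>k\<in>UNIV. \<Sum>l\<in>UNIV. ginv g x $ l $ k * pd l u x * pd k f x)"
      by (intro sum.cong refl) (simp add: ginv_sym[OF g_metric x])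
    also have "\<dots> = coinner g x (grad u x) (grad f x)"
      unfolding coinner_def grad_def by (subst sum.swap) simp
    finally show ?thesis .
  qed
  have "lap gh f x = (\<Sum>i\<in>UNIV. \<Sum>j\<in>UNIV. (u x)\<^sup>2 * (ginv g x $ i $ j *
      (pd i (pd j f) x - (\<Sum>k\<in>UNIV. chr g k i j x * pd k f x)))
      - (u x)\<^sup>2 * (ginv g x $ i $ j * (\<Sum>k\<in>UNIV. A.T k i j * pd k f x)))"
    unfolding lap_def ginv_conf_metric_entry[OF x] chrx by (simp add: algebra_simps sum.distrib)
  also have "\<dots> = (u x)\<^sup>2 * lap g f x - (u x)\<^sup>2 * E"
    unfolding lap_def E_def by (simp add: sum_subtractf sum_distrib_left)
  also have "\<dots> = (u x)\<^sup>2 * lap g f x - (real CARD('n) - 2) * u x * coinner g x (grad u x) (grad f x)"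
    unfolding E cw using ux by (simp add: field_simps power2_eq_square)
  finally show ?thesis .
qed

lemma pd_quotient:
  assumes vs: "smooth_fun U v" and y: "y \<in> U"
  shows "pd j (\<lambda>y. v y / u y) y = pd j v y / u y - v y * pd j u y / (u y)\<^sup>2"
  by (rule pd_divide[OF smooth_fun_partial_differentiable[OF vs y]
        smooth_fun_partial_differentiable[OF u_smooth y] u_nonzero[OF y]])

lemma grad_quotient:
  assumes vs: "smooth_fun U v" and x: "x \<in> U"
  shows "grad (\<lambda>y. v y / u y) x = (1 / u x) *\<^sub>R grad v x - (v x / (u x)\<^sup>2) *\<^sub>R grad u x"
  unfolding grad_def vec_eq_iff by (simp add: pd_quotient[OF vs x])

lemma pd_pd_quotient:
  assumes vs: "smooth_fun U v" and x: "x \<in> U"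
  shows "pd i (pd j (\<lambda>y. v y / u y)) x = pd i (pd j v) x / u x - pd j v x * pd i u x / (u x)\<^sup>2
     - (pd i v x * pd j u x / (u x)\<^sup>2 + v x * pd i (pd j u) x / (u x)\<^sup>2 - 2 * v x * pd j u x * pd i u x / (u x)^3)"
proof -
  note du = smooth_fun_partial_differentiable[OF u_smooth x]
    and dv = smooth_fun_partial_differentiable[OF vs x]
    and dpu = smooth_fun_partial_differentiable[OF smooth_fun_pd[OF u_smooth] x]
    and dpv = smooth_fun_partial_differentiable[OF smooth_fun_pd[OF vs] x]
  have ux: "u x \<noteq> 0" by (rule u_nonzero[OF x])
  have "pd i (pd j (\<lambda>y. v y / u y)) x = pd i (\<lambda>y. pd j v y / u y - v y * pd j u y / (u y * u y)) x"
    by (rule pd_cong_open(1)[OF U_open x]) (simp add: pd_quotient[OF vs] power2_eq_square)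
  also have "\<dots> = pd i (pd j v) x / u x - pd j v x * pd i u x / (u x)\<^sup>2
      - ((pd i v x * pd j u x + v x * pd i (pd j u) x) / (u x * u x)
         - v x * pd j u x * (pd i u x * u x + u x * pd i u x) / (u x * u x)\<^sup>2)"
    using du dv dpu dpv ux
    by (simp add: pd_diff pd_divide pd_mult partial_differentiable_diff partial_differentiable_divide
        partial_differentiable_mult)
  also have "\<dots> = pd i (pd j v) x / u x - pd j v x * pd i u x / (u x)\<^sup>2
     - (pd i v x * pd j u x / (u x)\<^sup>2 + v x * pd i (pd j u) x / (u x)\<^sup>2 - 2 * v x * pd j u x * pd i u x / (u x)^3)"
    using ux by (simp add: field_simps power2_eq_square power3_eq_cube)
  finally show ?thesis .
qed

lemma hess_quotient:
  assumes vs: "smooth_fun U v" and x: "x \<in> U"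
  shows "hess g (\<lambda>y. v y / u y) x i j = hess g v x i j / u x
     - (pd i u x * pd j v x + pd i v x * pd j u x) / (u x)\<^sup>2
     - v x * hess g u x i j / (u x)\<^sup>2 + 2 * v x * pd i u x * pd j u x / (u x)^3"
proof -
  have chr_term: "(\<Sum>k\<in>UNIV. chr g k i j x * pd k (\<lambda>y. v y / u y) x)
      = (\<Sum>k\<in>UNIV. chr g k i j x * pd k v x) / u x - v x * (\<Sum>k\<in>UNIV. chr g k i j x * pd k u x) / (u x)\<^sup>2"
    unfolding pd_quotient[OF vs x]
    by (simp add: right_diff_distrib sum_subtractf sum_divide_distrib sum_distrib_left divide_inverse mult_ac)
  show ?thesis
    unfolding hess_def pd_pd_quotient[OF vs x] chr_term using u_nonzero[OF x]
    by (simp add: field_simps power2_eq_square power3_eq_cube)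
qed

lemma lap_quotient:
  assumes vs: "smooth_fun U v" and x: "x \<in> U"
  shows "lap g (\<lambda>y. v y / u y) x = lap g v x / u x - 2 * coinner g x (grad u x) (grad v x) / (u x)\<^sup>2
     - v x * lap g u x / (u x)\<^sup>2 + 2 * v x * coinner g x (grad u x) (grad u x) / (u x)^3"
proof -
  define H where "H i j = ginv g x $ i $ j" for i j
  have entry: "H i j * hess g (\<lambda>y. v y / u y) x i j = 1 / u x * (H i j * hess g v x i j)
      - 1 / (u x)\<^sup>2 * (H i j * pd i u x * pd j v x) - 1 / (u x)\<^sup>2 * (H i j * pd i v x * pd j u x)
      - v x / (u x)\<^sup>2 * (H i j * hess g u x i j) + 2 * v x / (u x)^3 * (H i j * pd i u x * pd j u x)" for i j
    unfolding hess_quotient[OF vs x] by (simp add: algebra_simps add_divide_distrib diff_divide_distrib)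
  have uv: "(\<Sum>i\<in>UNIV. \<Sum>j\<in>UNIV. H i j * pd i u x * pd j v x) = coinner g x (grad u x) (grad v x)"
    and vu: "(\<Sum>i\<in>UNIV. \<Sum>j\<in>UNIV. H i j * pd i v x * pd j u x) = coinner g x (grad u x) (grad v x)"
    and uu: "(\<Sum>i\<in>UNIV. \<Sum>j\<in>UNIV. H i j * pd i u x * pd j u x) = coinner g x (grad u x) (grad u x)"
    using coinner_sym[OF g_metric x, of "grad v x" "grad u x"] unfolding coinner_def grad_def H_def by simp_all
  show ?thesis
    unfolding lap_eq_hess H_def[symmetric] entry sum.distrib sum_subtractf sum_distrib_left[symmetric] uv vu uu
    using u_nonzero[OF x] by (simp add: field_simps)
qed

lemma Rmphi_conf_metric:
  assumes vs: "smooth_fun U v" and x: "x \<in> U" and vx: "v x \<noteq> 0"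
  shows "Rmphi gh m (\<lambda>y. v y / u y) x + m * \<mu> / (v x / u x)\<^sup>2
    = (u x)\<^sup>2 * (Rmphi g m v x + m * \<mu> / (v x)\<^sup>2) + 2 * (m + real CARD('n) - 1) * u x * lap_phi g m v u x
      - (m + real CARD('n)) * (m + real CARD('n) - 1) * coinner g x (grad u x) (grad u x)"
proof -
  have ux: "u x \<noteq> 0" by (rule u_nonzero[OF x])
  define A where "A = coinner g x (grad u x) (grad u x)"
  define B where "B = coinner g x (grad v x) (grad v x)"
  define C where "C = coinner g x (grad u x) (grad v x)"
  have C': "coinner g x (grad v x) (grad u x) = C" unfolding C_def by (rule coinner_sym[OF g_metric x])
  note grad_vu = grad_quotient[OF vs x]
  have "coinner g x (grad u x) (grad (\<lambda>y. v y / u y) x) = C / u x - v x * A / (u x)\<^sup>2"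
    unfolding grad_vu coinner_diff_right coinner_scaleR_right C_def[symmetric] A_def[symmetric] by simp
  then have lap_vu: "lap gh (\<lambda>y. v y / u y) x
      = (u x)\<^sup>2 * (lap g v x / u x - 2 * C / (u x)\<^sup>2 - v x * lap g u x / (u x)\<^sup>2 + 2 * v x * A / (u x)^3)
        - (real CARD('n) - 2) * u x * (C / u x - v x * A / (u x)\<^sup>2)"
    unfolding lap_conf_metric[OF x] lap_quotient[OF vs x] C_def A_def by simp
  have grad_vu_sq: "coinner gh x (grad (\<lambda>y. v y / u y) x) (grad (\<lambda>y. v y / u y) x)
     = (u x)\<^sup>2 * (B / (u x)\<^sup>2 - 2 * v x * C / (u x)^3 + (v x)\<^sup>2 * A / (u x)^4)"
    unfolding coinner_conf_metric[OF x] grad_vu coinner_diff_right coinner_diff_left coinner_scaleR_right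
      coinner_scaleR_left C' C_def[symmetric] A_def[symmetric] B_def[symmetric]
    using ux by (simp add: field_simps eval_nat_numeral)
  show ?thesis
    unfolding Rmphi_def[of gh] scal_conf_metric[OF x] lap_vu grad_vu_sq
    unfolding Rmphi_def lap_phi_def C' A_def[symmetric] B_def[symmetric] C_def[symmetric]
    by (rule weighted_scalar_rescaling_identity[OF ux vx])
qed

end

section \<open>The tractor norm\<close>

lemma tractor_sqnorm_scaled_DW:
  fixes g :: "'n::finite metric" and m :: real
  defines "N \<equiv> m + real CARD('n)"
  assumes N0: "N \<noteq> 0" and N1: "N - 1 \<noteq> 0"
  shows "tractor_sqnorm g x (tractor_scale (1 / N) (DW g m \<mu> v 1 u x)) =
    - ((Rmphi g m v x + m * \<mu> / (v x)^2) * (u x)^2 + 2 * (N - 1) * u x * lap_phi g m v u x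
       - N * (N - 1) * coinner g x (grad u x) (grad u x)) / (N * (N - 1))"
proof -
  have "tractor_scale (1 / N) (DW g m \<mu> v 1 u x) = (u x, grad u x, - (lap_phi g m v u x + JW g m \<mu> v x * u x) / N)"
    using N0 unfolding DW_def tractor_scale_def N_def by (simp add: Let_def divide_inverse)
  then show ?thesis
    using N0 N1 unfolding tractor_sqnorm_def JW_def N_def[symmetric]
    by (simp add: field_simps power2_eq_square)
qed

lemma mult_neg_mult_eq_iff:
  fixes a b t s :: real
  assumes "a \<noteq> 0" "b \<noteq> 0"
  shows "- (a * b) * t = a * s \<longleftrightarrow> t = - s / b"
proof -
  have "- (a * b) * t = a * s \<longleftrightarrow> a * (- b * t) = a * s" by (simp add: algebra_simps)
  also have "\<dots> \<longleftrightarrow> - b * t = s" using assms(1) by (rule mult_left_cancel)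
  also have "\<dots> \<longleftrightarrow> t = - s / b" using assms(2) by (auto simp: field_simps)
  finally show ?thesis .
qed

lemma Rmphi_conf_metric_tractor_sqnorm:
  fixes g :: "'n::finite metric" and m :: real
  defines "N \<equiv> m + real CARD('n)"
  assumes "conformal_rescaling U g u" "smooth_fun U v" "x \<in> U" "v x \<noteq> 0"
    and N0: "N \<noteq> 0" and N1: "N - 1 \<noteq> 0"
  shows "Rmphi (conf_metric u g) m (\<lambda>y. v y / u y) x + m * \<mu> / (v x / u x)^2
      = - (N * (N - 1)) * tractor_sqnorm g x (tractor_scale (1 / N) (DW g m \<mu> v 1 u x))"
  using conformal_rescaling.Rmphi_conf_metric[OF assms(2-5), of m \<mu>]
  unfolding tractor_sqnorm_scaled_DW[OF N0[unfolded N_def] N1[unfolded N_def], folded N_def]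
  using N0 N1 by (simp add: N_def ac_simps)

theorem lemma4p7:
  fixes U :: "(real^'n::finite) set"
    and g :: "'n metric"
    and v u :: "real^'n \<Rightarrow> real"
    and m \<mu> :: real
  assumes n3: "CARD('n) \<ge> 3"
    and U_open: "open U"
    and g_metric: "riem_metric U g"
    and v_smooth: "smooth_fun U v" and v_pos: "\<forall>x\<in>U. v x > 0"
    and u_smooth: "smooth_fun U u"
    and m_ok: "m \<notin> {- real CARD('n), 1 - real CARD('n), 2 - real CARD('n)}"
  defines "n \<equiv> real CARD('n)"
  defines "I \<equiv> (\<lambda>x. tractor_scale (1 / (m + n)) (DW g m \<mu> v 1 u x))"
  shows "(\<forall>x\<in>U. tractor_sqnorm g x (I x) =
            - ((Rmphi g m v x + m * \<mu> / (v x)^2) * (u x)^2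
               + 2 * (m + n - 1) * u x * lap_phi g m v u x
               - (m + n) * (m + n - 1) * coinner g x (grad u x) (grad u x))
            / ((m + n) * (m + n - 1)))
       \<and> ((\<forall>x\<in>U. u x > 0) \<longrightarrow>
           (\<forall>lam::real.
              (\<forall>x\<in>U. Rmphi (conf_metric u g) m (\<lambda>y. v y / u y) x
                        + m * \<mu> / (v x / u x)^2 = (m + n) * lam)
              \<longleftrightarrow> (\<forall>x\<in>U. tractor_sqnorm g x (I x) = - lam / (m + n - 1))))"
proof -
  have N0: "m + n \<noteq> 0" and N1: "m + n - 1 \<noteq> 0"
    using m_ok unfolding n_def by (auto simp: algebra_simps)
  note norm = tractor_sqnorm_scaled_DW[OF N0[unfolded n_def] N1[unfolded n_def], folded n_def]
  have "(\<forall>x\<in>U. Rmphi (conf_metric u g) m (\<lambda>y. v y / u y) x + m * \<mu> / (v x / u x)^2 = (m + n) * lam)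
      \<longleftrightarrow> (\<forall>x\<in>U. tractor_sqnorm g x (I x) = - lam / (m + n - 1))"
    if "\<forall>x\<in>U. u x > 0" for lam
  proof -
    have "conformal_rescaling U g u"
      using U_open g_metric u_smooth that by unfold_locales
    from Rmphi_conf_metric_tractor_sqnorm[OF this v_smooth _ _ N0[unfolded n_def] N1[unfolded n_def]]
    show ?thesis
      using v_pos mult_neg_mult_eq_iff[OF N0 N1] unfolding I_def n_def by (auto simp: less_imp_neq[symmetric])
  qed
  then show ?thesis using norm unfolding I_def by blast
qed

end
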